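(* Let $\mathbb{T}=\mathbb{R}/\mathbb{Z}$, $a=1/2$, fix $0<\rho<1/20$, and let $\omega(r):=\sin(\log\log(1/r))$ for $0<r<\rho$. Let $A\neq 0$ satisfy $2|A|\rho^2\le 1/4$. Let $V\in C^3(\mathbb{T})$ satisfy $V(x)=\tfrac12 x^2+Ax^4\omega(|x|)$ for $|x|<\rho$ (with $V(0)=0$), $V(x)=\tfrac12(x-a)^2-A(x-a)^4\omega(|x-a|)$ for $|x-a|<\rho$ (with $V(a)=0$), and $V(x)>0$ for all $x\in\mathbb{T}\setminus\{0,a\}$. For $\varepsilon>0$ let $P_\varepsilon:=-2\varepsilon^2\frac{d^2}{dx^2}+V$ on $\mathbb{T}$, let $U_\varepsilon>0$ be its positive principal eigenfunction normalized by $\int_{\mathbb{T}}U_\varepsilon^2\,dx=1$, and set $\phi^\varepsilon:=-2\varepsilon\log\big(U_\varepsilon/U_\varepsilon(0)\big)$. Let $E_0^D(\varepsilon)$ and $E_a^D(\varepsilon)$ be the first Dirichlet eigenvalues of $P_\varepsilon$ on $(-\rho,\rho)$ and on $(a-\rho,a+\rho)$, respectively. Fix $C_0>0$. Then there are constants $\sigma>0$, $C>0$, $\varepsilon_0>0$ with the following property. If, along a sequence $\varepsilon\to0$, $$E_0^D(\varepsilon)\le E_a^D(\varepsilon)-C_0\varepsilon^2,$$ then for $0<\varepsilon<\varepsilon_0$ along that sequence, $\dfrac{U_\varepsilon(a)}{U_\varepsilon(0)}\le Ce^{-\sigma/\varepsilon}$, and consequently $\liminf_{\varepsilon\to0}\phi^\varepsilon(a)>0$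 along that sequence. Similarly, if along a sequence $\varepsilon\to0$, $$E_a^D(\varepsilon)\le E_0^D(\varepsilon)-C_0\varepsilon^2,$$ then for $0<\varepsilon<\varepsilon_0$ along that sequence, $\dfrac{U_\varepsilon(0)}{U_\varepsilon(a)}\le Ce^{-\sigma/\varepsilon}$, and $\limsup_{\varepsilon\to0}\phi^\varepsilon(a)<0$ along that sequence.
   Context: Periodic functions on $\mathbb{R}$ are identified with functions on $\mathbb{T}$; intervals are understood in the periodic sense. The function $\phi^\varepsilon$ so defined is the solution, normalized by $\phi^\varepsilon(0)=0$, of $\tfrac12|(\phi^\varepsilon)'|^2-V-\varepsilon(\phi^\varepsilon)''=c(\varepsilon)$ on $\mathbb{T}$ for the appropriate constant $c(\varepsilon)$. *)

theory Defs
  imports "HOL-Analysis.Analysis"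
begin

text \<open>Functions on the torus T = R/Z are represented as 1-periodic functions on R.
  The operator is P_eps = -2 eps^2 d^2/dx^2 + V (classical, real-valued eigenfunctions).\<close>

definition periodic1 :: "(real \<Rightarrow> real) \<Rightarrow> bool" where
  "periodic1 f \<longleftrightarrow> (\<forall>x. f (x + 1) = f x)"

definition C3 :: "(real \<Rightarrow> real) \<Rightarrow> bool" where
  "C3 f \<longleftrightarrow> (\<forall>k<3. \<forall>x. ((deriv ^^ k) f) differentiable (at x))
              \<and> continuous_on UNIV ((deriv ^^ 3) f)"

definition omega :: "real \<Rightarrow> real" where
  "omega r = sin (ln (ln (1 / r)))"

definition periodic_eigenvalues :: "real \<Rightarrow> (real \<Rightarrow> real) \<Rightarrow> real set" where
  "periodic_eigenvalues \<epsilon> V = {lam. \<exists>u u' u''. periodic1 u \<and> (\<exists>x. u x \<noteq> 0) \<and>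
     (\<forall>x. (u has_real_derivative u' x) (at x) \<and> (u' has_real_derivative u'' x) (at x) \<and>
          - 2 * \<epsilon>\<^sup>2 * u'' x + V x * u x = lam * u x)}"

definition principal_eigenvalue :: "real \<Rightarrow> (real \<Rightarrow> real) \<Rightarrow> real" where
  "principal_eigenvalue \<epsilon> V = Inf (periodic_eigenvalues \<epsilon> V)"

definition principal_eigenfunction :: "real \<Rightarrow> (real \<Rightarrow> real) \<Rightarrow> (real \<Rightarrow> real) \<Rightarrow> bool" where
  "principal_eigenfunction \<epsilon> V U \<longleftrightarrow> periodic1 U \<and> (\<forall>x. U x > 0) \<and>
     (\<exists>U' U''. \<forall>x. (U has_real_derivative U' x) (at x) \<and> (U' has_real_derivative U'' x) (at x) \<and>
          - 2 * \<epsilon>\<^sup>2 * U'' x + V x * U x = principal_eigenvalue \<epsilon> V * U x) \<and>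
     integral {0..1} (\<lambda>x. (U x)\<^sup>2) = 1"

definition dirichlet_eigenvalues :: "real \<Rightarrow> (real \<Rightarrow> real) \<Rightarrow> real \<Rightarrow> real \<Rightarrow> real set" where
  "dirichlet_eigenvalues \<epsilon> V l r = {lam. \<exists>u u' u''. continuous_on {l..r} u \<and> u l = 0 \<and> u r = 0 \<and>
     (\<exists>x\<in>{l<..<r}. u x \<noteq> 0) \<and>
     (\<forall>x\<in>{l<..<r}. (u has_real_derivative u' x) (at x) \<and> (u' has_real_derivative u'' x) (at x) \<and>
          - 2 * \<epsilon>\<^sup>2 * u'' x + V x * u x = lam * u x)}"

definition first_dirichlet_eigenvalue :: "real \<Rightarrow> (real \<Rightarrow> real) \<Rightarrow> real \<Rightarrow> real \<Rightarrow> real" where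
  "first_dirichlet_eigenvalue \<epsilon> V l r = Inf (dirichlet_eigenvalues \<epsilon> V l r)"

end

(*
  Let U be the positive eigenfunction of -2 eps^2 d^2/dx^2 + V on the torus, with eigenvalue
  Lambda and maximum M.  A cosine test function gives Lambda < 6 eps, and Sturm comparison with U
  shows that every Dirichlet eigenvalue of either well lies above Lambda.  Away from the wells
  V - Lambda is bounded below by a positive constant, so by the maximum principle U is at most
  2 M exp (-sigma/eps) at the well edges; by a Harnack inequality U is comparable to M within
  5 sqrt eps of the well that carries the maximum.

  If U were not exp (-sigma/(2 eps)) M-small at the centre of a well, then U minus twice its
  larger edge value would be a positive subsolution on that well at level Lambda + C0 eps^2 / 2, and a
  shooting argument (raise the energy of the solution with y l = 0, y' l = 1 until its first
  zero reaches the right endpoint) produces a Dirichlet eigenvalue below that level.  This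
  contradicts the gap C0 eps^2 between the two well eigenvalues.  So U is small at the well
  with the larger Dirichlet eigenvalue, the maximum sits at the other one, and the ratio of the values of U at the two wells is
  O(exp (-sigma/eps)); the statements on phi^eps are its logarithm.
*)

theory Submission
  imports Defs
begin

section \<open>Linear second-order ODEs\<close>

fun picard_iterate :: "(real \<Rightarrow> real) \<Rightarrow> real \<Rightarrow> nat \<Rightarrow> real \<Rightarrow> real \<times> real" where
  "picard_iterate q l 0 x = (x - l, 1)"
| "picard_iterate q l (Suc n) x =
     (integral {l..x} (\<lambda>t. snd (picard_iterate q l n t)),
      1 + integral {l..x} (\<lambda>t. q t * fst (picard_iterate q l n t)))"

definition picard_increment :: "(real \<Rightarrow> real) \<Rightarrow> real \<Rightarrow> nat \<Rightarrow> real \<Rightarrow> real" where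
  "picard_increment q l n x =
     \<bar>fst (picard_iterate q l (Suc n) x) - fst (picard_iterate q l n x)\<bar> +
     \<bar>snd (picard_iterate q l (Suc n) x) - snd (picard_iterate q l n x)\<bar>"

lemma continuous_on_picard_iterate:
  assumes q: "continuous_on {l..r} q"
  shows "continuous_on {l..r} (\<lambda>x. fst (picard_iterate q l n x)) \<and>
         continuous_on {l..r} (\<lambda>x. snd (picard_iterate q l n x))"
proof (induction n)
  case 0
  then show ?case by (auto intro!: continuous_intros)
next
  case (Suc n)
  have "continuous_on {l..r} (\<lambda>x. integral {l..x} (\<lambda>t. snd (picard_iterate q l n t)))"
   and "continuous_on {l..r} (\<lambda>x. 1 + integral {l..x} (\<lambda>t. q t * fst (picard_iterate q l n t)))"
    using Suc q by (auto intro!: continuous_on_add continuous_on_mult continuous_on_const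
        indefinite_integral_continuous_1 integrable_continuous_interval)
  then show ?case by (simp only: picard_iterate.simps fst_conv snd_conv)
qed

lemma continuous_on_picard_increment:
  "continuous_on {l..r} q \<Longrightarrow> continuous_on {l..r} (picard_increment q l n)"
  unfolding picard_increment_def
  using continuous_on_picard_iterate[of l r q n] continuous_on_picard_iterate[of l r q "Suc n"]
  by (intro continuous_on_add continuous_on_rabs continuous_on_diff) auto

lemma integral_shifted_power:
  fixes l x c :: real
  assumes "l \<le> x"
  shows "integral {l..x} (\<lambda>t. c * (t - l) ^ n / fact n) = c * (x - l) ^ Suc n / fact (Suc n)"
proof -
  let ?F = "\<lambda>t. c * (t - l) ^ Suc n / fact (Suc n)"
  have "((\<lambda>t. c * (t - l) ^ n / fact n) has_integral ?F x - ?F l) {l..x}"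
  proof (rule fundamental_theorem_of_calculus[OF assms])
    fix t
    have "(?F has_real_derivative c * (real (Suc n) * (t - l) ^ n * 1) / fact (Suc n)) (at t within {l..x})"
      by (intro derivative_eq_intros) auto
    also have "c * (real (Suc n) * (t - l) ^ n * 1) / fact (Suc n) = c * (t - l) ^ n / fact n"
      by (simp add: fact_Suc field_simps del: of_nat_Suc)
    finally show "(?F has_vector_derivative c * (t - l) ^ n / fact n) (at t within {l..x})"
      by (simp add: has_real_derivative_iff_has_vector_derivative)
  qed
  then show ?thesis
    by (simp add: integral_unique del: integral_mult_left integral_divide integral_mult_right)
qed

lemma picard_iterate_Suc_differences:
  assumes q: "continuous_on {l..r} q" and x: "x \<in> {l..r}"
  shows "fst (picard_iterate q l (Suc (Suc n)) x) - fst (picard_iterate q l (Suc n) x) =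
           integral {l..x} (\<lambda>t. snd (picard_iterate q l (Suc n) t) - snd (picard_iterate q l n t))"
    and "snd (picard_iterate q l (Suc (Suc n)) x) - snd (picard_iterate q l (Suc n) x) =
           integral {l..x} (\<lambda>t. q t * (fst (picard_iterate q l (Suc n) t) - fst (picard_iterate q l n t)))"
proof -
  have sub: "{l..x} \<subseteq> {l..r}" using x by auto
  have c: "\<And>m. continuous_on {l..x} (\<lambda>t. fst (picard_iterate q l m t))"
          "\<And>m. continuous_on {l..x} (\<lambda>t. snd (picard_iterate q l m t))"
    using continuous_on_picard_iterate[OF q] continuous_on_subset[OF _ sub] by blast+
  have cq: "continuous_on {l..x} q" using continuous_on_subset[OF q sub] .
  have y: "\<And>m. fst (picard_iterate q l (Suc m) x) = integral {l..x} (\<lambda>t. snd (picard_iterate q l m t))"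
    and z: "\<And>m. snd (picard_iterate q l (Suc m) x) = 1 + integral {l..x} (\<lambda>t. q t * fst (picard_iterate q l m t))"
    by simp_all
  show "fst (picard_iterate q l (Suc (Suc n)) x) - fst (picard_iterate q l (Suc n) x) =
          integral {l..x} (\<lambda>t. snd (picard_iterate q l (Suc n) t) - snd (picard_iterate q l n t))"
    unfolding y[of "Suc n"] y[of n] by (rule integral_diff[symmetric]; intro integrable_continuous_interval c)
  show "snd (picard_iterate q l (Suc (Suc n)) x) - snd (picard_iterate q l (Suc n) x) =
          integral {l..x} (\<lambda>t. q t * (fst (picard_iterate q l (Suc n) t) - fst (picard_iterate q l n t)))"
    unfolding z[of "Suc n"] z[of n] right_diff_distrib
    by (simp only: add_diff_cancel_left, rule integral_diff[symmetric];
        intro integrable_continuous_interval continuous_on_mult cq c)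
qed

lemma picard_increment_bound:
  assumes q: "continuous_on {l..r} q" and Q: "\<And>t. t \<in> {l..r} \<Longrightarrow> \<bar>q t\<bar> \<le> Q"
    and M0: "\<And>x. x \<in> {l..r} \<Longrightarrow> picard_increment q l 0 x \<le> M0"
  shows "x \<in> {l..r} \<Longrightarrow> picard_increment q l n x \<le> M0 * (1 + Q) ^ n * (x - l) ^ n / fact n"
proof (induction n arbitrary: x)
  case 0
  then show ?case using M0 by simp
next
  case (Suc n)
  let ?y = "\<lambda>m t. fst (picard_iterate q l m t)" and ?z = "\<lambda>m t. snd (picard_iterate q l m t)"
  define B where "B t = M0 * (1 + Q) ^ n * (t - l) ^ n / fact n" for t
  have sub: "{l..x} \<subseteq> {l..r}" and xl: "l \<le> x" using Suc.prems by auto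
  have c: "\<And>m. continuous_on {l..x} (?y m)" "\<And>m. continuous_on {l..x} (?z m)"
    using continuous_on_picard_iterate[OF q] continuous_on_subset[OF _ sub] by blast+
  have cq: "continuous_on {l..x} q" using continuous_on_subset[OF q sub] .
  have B: "B integrable_on {l..x}"
    unfolding B_def by (intro integrable_continuous_interval continuous_intros) auto
  have IH: "\<bar>?y (Suc n) t - ?y n t\<bar> \<le> B t" "\<bar>?z (Suc n) t - ?z n t\<bar> \<le> B t" if "t \<in> {l..x}" for t
    using Suc.IH[of t] that sub unfolding picard_increment_def B_def by auto
  have "\<bar>?y (Suc (Suc n)) x - ?y (Suc n) x\<bar> \<le> integral {l..x} B"
    unfolding picard_iterate_Suc_differences(1)[OF q Suc.prems] real_norm_def[symmetric]
  proof (rule integral_norm_bound_integral)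
    show "(\<lambda>t. ?z (Suc n) t - ?z n t) integrable_on {l..x}"
      by (intro integrable_continuous_interval continuous_on_diff c)
  qed (use B IH in auto)
  moreover have "\<bar>?z (Suc (Suc n)) x - ?z (Suc n) x\<bar> \<le> integral {l..x} (\<lambda>t. Q * B t)"
    unfolding picard_iterate_Suc_differences(2)[OF q Suc.prems] real_norm_def[symmetric]
  proof (rule integral_norm_bound_integral)
    show "(\<lambda>t. q t * (?y (Suc n) t - ?y n t)) integrable_on {l..x}"
      by (intro integrable_continuous_interval continuous_intros cq c)
    show "(\<lambda>t. Q * B t) integrable_on {l..x}" using integrable_on_cmult_left[OF B] by simp
    fix t assume t: "t \<in> {l..x}"
    then show "norm (q t * (?y (Suc n) t - ?y n t)) \<le> Q * B t"
      unfolding real_norm_def abs_mult using Q[of t] IH(1)[OF t] sub by (intro mult_mono) auto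
  qed
  ultimately have "picard_increment q l (Suc n) x \<le> (1 + Q) * integral {l..x} B"
    unfolding picard_increment_def by (simp add: algebra_simps)
  also have "\<dots> = M0 * (1 + Q) ^ Suc n * (x - l) ^ Suc n / fact (Suc n)"
    unfolding B_def integral_shifted_power[OF xl] by simp
  finally show ?case .
qed

lemma uniform_limit_telescoping:
  fixes f :: "nat \<Rightarrow> real \<Rightarrow> real"
  assumes "\<And>n x. x \<in> A \<Longrightarrow> \<bar>f (Suc n) x - f n x\<bar> \<le> M n" "summable M"
  shows "uniform_limit A f (\<lambda>x. f 0 x + (\<Sum>i. f (Suc i) x - f i x)) sequentially"
proof -
  have "uniform_limit A (\<lambda>n x. \<Sum>i<n. f (Suc i) x - f i x) (\<lambda>x. \<Sum>i. f (Suc i) x - f i x) sequentially"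
    by (rule Weierstrass_m_test) (use assms in auto)
  then have "uniform_limit A (\<lambda>n x. f 0 x + (\<Sum>i<n. f (Suc i) x - f i x))
               (\<lambda>x. f 0 x + (\<Sum>i. f (Suc i) x - f i x)) sequentially"
    by (intro uniform_limit_add uniform_limit_const)
  moreover have "(\<lambda>n x. f 0 x + (\<Sum>i<n. f (Suc i) x - f i x)) = f"
    by (intro ext) (simp add: sum_lessThan_telescope[of "\<lambda>i. f i _"])
  ultimately show ?thesis by simp
qed

lemma picard_iterate_uniform_limit:
  assumes q: "continuous_on {l..r} q"
  obtains y z where
    "uniform_limit {l..r} (\<lambda>n x. fst (picard_iterate q l n x)) y sequentially"
    "uniform_limit {l..r} (\<lambda>n x. snd (picard_iterate q l n x)) z sequentially"
proof -
  obtain Q where Q: "\<And>t. t \<in> {l..r} \<Longrightarrow> \<bar>q t\<bar> \<le> Q"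
    using continuous_on_compact_bound[OF compact_Icc q] by (metis real_norm_def)
  obtain M0 where M0: "\<And>x. x \<in> {l..r} \<Longrightarrow> picard_increment q l 0 x \<le> M0"
    using continuous_on_compact_bound[OF compact_Icc continuous_on_picard_increment[OF q]]
    by (metis abs_le_D1 real_norm_def)
  define M where "M n = M0 * (inverse (fact n) * ((1 + Q) * (r - l)) ^ n)" for n
  have "summable M" unfolding M_def by (intro summable_mult summable_exp)
  have "picard_increment q l n x \<le> M n" if x: "x \<in> {l..r}" for n x
  proof -
    have "picard_increment q l n x \<le> M0 * (1 + Q) ^ n * (x - l) ^ n / fact n"
      by (rule picard_increment_bound[OF q Q M0 x])
    also have "\<dots> \<le> M0 * (1 + Q) ^ n * (r - l) ^ n / fact n"
      using x M0[OF x] Q[OF x] picard_increment_def[of q l 0 x]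
      by (intro divide_right_mono mult_left_mono power_mono) auto
    also have "\<dots> = M n" by (simp add: M_def power_mult_distrib divide_inverse mult_ac)
    finally show ?thesis .
  qed
  then have "\<And>n x. x \<in> {l..r} \<Longrightarrow> \<bar>fst (picard_iterate q l (Suc n) x) - fst (picard_iterate q l n x)\<bar> \<le> M n"
        and "\<And>n x. x \<in> {l..r} \<Longrightarrow> \<bar>snd (picard_iterate q l (Suc n) x) - snd (picard_iterate q l n x)\<bar> \<le> M n"
    unfolding picard_increment_def by (smt (verit) abs_ge_zero)+
  then show ?thesis
    using uniform_limit_telescoping[of "{l..r}" "\<lambda>n x. fst (picard_iterate q l n x)" M]
      uniform_limit_telescoping[of "{l..r}" "\<lambda>n x. snd (picard_iterate q l n x)" M]
      \<open>summable M\<close> that by blast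
qed

lemma tendsto_integral_uniform_limit:
  fixes f :: "nat \<Rightarrow> real \<Rightarrow> real"
  assumes "uniform_limit {l..r} f g sequentially" "\<And>n. continuous_on {l..r} (f n)" "x \<in> {l..r}"
  shows "(\<lambda>n. integral {l..x} (f n)) \<longlonglongrightarrow> integral {l..x} g"
proof -
  have sub: "{l..x} \<subseteq> {l..r}" using assms(3) by auto
  obtain I J where "\<And>n. (f n has_integral I n) {l..x}" "(g has_integral J) {l..x}" "I \<longlonglongrightarrow> J"
    using uniform_limit_integral[OF uniform_limit_on_subset[OF assms(1) sub]
        continuous_on_subset[OF assms(2) sub]] by auto
  then have "(\<lambda>n. integral {l..x} (f n)) = I" "integral {l..x} g = J"
    by (auto simp: integral_unique)
  with \<open>I \<longlonglongrightarrow> J\<close> show ?thesis by simp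
qed

lemma linear_ode_integral_solution:
  fixes q :: "real \<Rightarrow> real"
  assumes q: "continuous_on {l..r} q"
  obtains y z where "continuous_on {l..r} y" "continuous_on {l..r} z"
    "\<And>x. x \<in> {l..r} \<Longrightarrow> y x = integral {l..x} z"
    "\<And>x. x \<in> {l..r} \<Longrightarrow> z x = 1 + integral {l..x} (\<lambda>t. q t * y t)"
proof -
  obtain y z where
    uy: "uniform_limit {l..r} (\<lambda>n x. fst (picard_iterate q l n x)) y sequentially" and
    uz: "uniform_limit {l..r} (\<lambda>n x. snd (picard_iterate q l n x)) z sequentially"
    using picard_iterate_uniform_limit[OF q] .
  have c: "\<And>n. continuous_on {l..r} (\<lambda>x. fst (picard_iterate q l n x))"
          "\<And>n. continuous_on {l..r} (\<lambda>x. snd (picard_iterate q l n x))"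
    using continuous_on_picard_iterate[OF q] by blast+
  have cy: "continuous_on {l..r} y" and cz: "continuous_on {l..r} z"
    using uniform_limit_theorem[OF _ uy] uniform_limit_theorem[OF _ uz] c by auto
  have uqy: "uniform_limit {l..r} (\<lambda>n t. q t * fst (picard_iterate q l n t)) (\<lambda>t. q t * y t) sequentially"
    using uniform_lim_mult[OF uniform_limit_const uy] q cy
    by (auto intro!: compact_imp_bounded compact_continuous_image)
  have eqs: "y x = integral {l..x} z \<and> z x = 1 + integral {l..x} (\<lambda>t. q t * y t)" if x: "x \<in> {l..r}" for x
  proof -
    have "(\<lambda>n. fst (picard_iterate q l (Suc n) x)) \<longlonglongrightarrow> y x"
      using tendsto_uniform_limitI[OF uy x] by (rule LIMSEQ_Suc)
    moreover have "(\<lambda>n. snd (picard_iterate q l (Suc n) x)) \<longlonglongrightarrow> z x"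
      using tendsto_uniform_limitI[OF uz x] by (rule LIMSEQ_Suc)
    moreover have "(\<lambda>n. fst (picard_iterate q l (Suc n) x)) \<longlonglongrightarrow> integral {l..x} z"
      using tendsto_integral_uniform_limit[OF uz c(2) x] by simp
    moreover have "(\<lambda>n. integral {l..x} (\<lambda>t. q t * fst (picard_iterate q l n t)))
                     \<longlonglongrightarrow> integral {l..x} (\<lambda>t. q t * y t)"
      by (rule tendsto_integral_uniform_limit[OF uqy _ x]) (intro continuous_on_mult q c(1))
    then have "(\<lambda>n. snd (picard_iterate q l (Suc n) x)) \<longlonglongrightarrow> 1 + integral {l..x} (\<lambda>t. q t * y t)"
      using tendsto_add[OF tendsto_const] by simp
    ultimately show ?thesis by (auto dest: LIMSEQ_unique)
  qed
  show ?thesis by (rule that[OF cy cz]) (use eqs in blast)+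
qed

lemma linear_ode_exists:
  assumes lr: "l \<le> r" and q: "continuous_on {l..r} q"
  shows "\<exists>y z. y l = 0 \<and> z l = 1 \<and> (\<forall>x\<in>{l..r}.
           (y has_real_derivative z x) (at x within {l..r}) \<and>
           (z has_real_derivative q x * y x) (at x within {l..r}))"
proof -
  obtain y z where cy: "continuous_on {l..r} y" and cz: "continuous_on {l..r} z"
    and y_eq: "\<And>x. x \<in> {l..r} \<Longrightarrow> y x = integral {l..x} z"
    and z_eq: "\<And>x. x \<in> {l..r} \<Longrightarrow> z x = 1 + integral {l..x} (\<lambda>t. q t * y t)"
    using linear_ode_integral_solution[OF q] by blast
  have "(y has_real_derivative z x) (at x within {l..r}) \<and>
        (z has_real_derivative q x * y x) (at x within {l..r})" if x: "x \<in> {l..r}" for x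
  proof
    show "(y has_real_derivative z x) (at x within {l..r})"
      by (rule has_field_derivative_transform_within[OF integral_has_real_derivative[OF cz x]
            zero_less_one x]) (simp add: y_eq)
    have "((\<lambda>x. 1 + integral {l..x} (\<lambda>t. q t * y t)) has_real_derivative q x * y x) (at x within {l..r})"
      using integral_has_real_derivative[of l r "\<lambda>t. q t * y t" x] q cy x
      by (auto intro!: derivative_eq_intros continuous_intros)
    then show "(z has_real_derivative q x * y x) (at x within {l..r})"
      by (rule has_field_derivative_transform_within[OF _ zero_less_one x]) (simp add: z_eq)
  qed
  moreover have "y l = 0" "z l = 1" using y_eq[of l] z_eq[of l] lr by auto
  ultimately show ?thesis by blast
qed

section \<open>Comparison principles in one dimension\<close>

lemma MVT_open:
  fixes f f' :: "real \<Rightarrow> real"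
  assumes "a < b" "continuous_on {a..b} f"
    and "\<And>x. a < x \<Longrightarrow> x < b \<Longrightarrow> (f has_real_derivative f' x) (at x)"
  shows "\<exists>z. a < z \<and> z < b \<and> f b - f a = (b - a) * f' z"
proof -
  obtain l z where z: "a < z" "z < b" "DERIV f z :> l" "f b - f a = (b - a) * l"
    using MVT[OF assms(1,2)] assms(3) real_differentiable_def by blast
  with DERIV_unique[OF z(3) assms(3)[OF z(1,2)]] show ?thesis by blast
qed

lemma second_derivative_nonpos_at_local_max:
  fixes f f' :: "real \<Rightarrow> real"
  assumes d: "0 < d"
    and max: "\<And>y. \<bar>y - x\<bar> < d \<Longrightarrow> f y \<le> f x"
    and df: "\<And>y. \<bar>y - x\<bar> < d \<Longrightarrow> (f has_real_derivative f' y) (at y)"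
    and df': "(f' has_real_derivative D) (at x)"
  shows "D \<le> 0"
proof (rule ccontr)
  assume "\<not> D \<le> 0"
  then obtain e where e: "e > 0" "\<And>h. h > 0 \<Longrightarrow> h < e \<Longrightarrow> f' x < f' (x + h)"
    using DERIV_pos_inc_right[OF df'] by auto
  have "f' x = 0"
    by (rule DERIV_local_max[OF df[of x] d]) (use max d in \<open>auto simp: abs_minus_commute\<close>)
  define h where "h = min e d / 2"
  have h: "h > 0" "h < e" "h < d" using e d unfolding h_def by auto
  have "continuous_on {x..x + h} f"
    by (rule has_real_derivative_imp_continuous_on[OF df]) (use h in auto)
  then obtain z where z: "x < z" "z < x + h" "f (x + h) - f x = h * f' z"
    using MVT_open[of x "x + h" f f'] h df by force
  have "f' z > 0" using e(2)[of "z - x"] z h \<open>f' x = 0\<close> by auto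
  then have "f (x + h) > f x" using z h by (smt (verit) mult_pos_pos)
  with max[of "x + h"] h show False by auto
qed

lemma gronwall_affine:
  fixes E E' :: "real \<Rightarrow> real"
  assumes lx: "l \<le> x" and cE: "continuous_on {l..x} E"
    and dE: "\<And>t. l < t \<Longrightarrow> t < x \<Longrightarrow> (E has_real_derivative E' t) (at t)"
    and ineq: "\<And>t. l < t \<Longrightarrow> t < x \<Longrightarrow> E' t \<le> K * E t + B"
    and K: "K > 0"
  shows "E x \<le> (E l + B / K) * exp (K * (x - l)) - B / K"
proof -
  define G where "G t = (E t + B / K) * exp (- K * (t - l))" for t
  have "G x \<le> G l"
  proof (rule DERIV_nonpos_imp_decreasing_open[OF lx])
    fix t assume t: "l < t" "t < x"
    have "(G has_real_derivative (E' t - K * E t - B) * exp (- K * (t - l))) (at t)"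
      unfolding G_def using dE[OF t] K by (auto intro!: derivative_eq_intros simp: field_simps)
    moreover have "(E' t - K * E t - B) * exp (- K * (t - l)) \<le> 0"
      using ineq[OF t] by (intro mult_nonpos_nonneg) auto
    ultimately show "\<exists>y. DERIV G t :> y \<and> y \<le> 0" by blast
  qed (use cE in \<open>auto simp: G_def intro!: continuous_intros\<close>)
  then have "(E x + B / K) * exp (- K * (x - l)) * exp (K * (x - l)) \<le> (E l + B / K) * exp (K * (x - l))"
    unfolding G_def by (intro mult_right_mono) auto
  then show ?thesis by (simp add: mult.assoc exp_add[symmetric])
qed

lemma first_zero_after:
  fixes u :: "real \<Rightarrow> real"
  assumes lx: "l < x0" and cu: "continuous_on {l..x0} u" and u0: "u x0 \<le> 0" and d: "\<delta> > 0"
    and near: "\<And>x. l < x \<Longrightarrow> x \<le> l + \<delta> \<Longrightarrow> u x > 0"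
  obtains t where "l < t" "t \<le> x0" "u t = 0" "\<And>x. l < x \<Longrightarrow> x < t \<Longrightarrow> u x > 0"
proof -
  have x0d: "l + \<delta> < x0" using near[of x0] u0 lx by force
  define T where "T = {l + \<delta>..x0} \<inter> u -` {..0}"
  have "closed T" unfolding T_def
    by (rule continuous_closed_preimage[OF continuous_on_subset[OF cu]]) (use d in auto)
  moreover have "x0 \<in> T" and bT: "bdd_below T" using x0d u0 unfolding T_def by auto
  ultimately have tT: "Inf T \<in> T" by (intro closed_contains_Inf) auto
  define t where "t = Inf T"
  have t: "l + \<delta> \<le> t" "t \<le> x0" "u t \<le> 0" using tT unfolding T_def t_def by auto
  have pos: "u x > 0" if "l < x" "x < t" for x
  proof (cases "x \<le> l + \<delta>")
    case False
    then have "x \<notin> T" using cInf_lower[OF _ bT, of x] that unfolding t_def by force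
    then show ?thesis using False that t unfolding T_def by force
  qed (use near that in auto)
  have "u t = 0"
  proof (rule ccontr)
    assume "u t \<noteq> 0"
    then have "u t < 0" using t by simp
    moreover have "u (l + \<delta> / 2) > 0" using near d by simp
    ultimately obtain z where "l + \<delta> / 2 \<le> z" "z \<le> t" "u z = 0"
      using IVT2'[of u t 0 "l + \<delta> / 2"] continuous_on_subset[OF cu, of "{l + \<delta> / 2..t}"] t d by force
    with pos[of z] \<open>u t < 0\<close> d show False by (cases "z = t") auto
  qed
  with t pos d show ?thesis by (intro that) auto
qed

lemma positive_component_around:
  fixes p :: "real \<Rightarrow> real"
  assumes cp: "continuous_on {l..r} p" and pl: "p l \<le> 0" and pr: "p r \<le> 0"
    and x0: "l < x0" "x0 < r" "p x0 > 0"
  obtains c d where "l \<le> c" "c < x0" "x0 < d" "d \<le> r" "p c = 0" "p d = 0"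
    "\<And>x. c < x \<Longrightarrow> x < d \<Longrightarrow> p x > 0"
proof -
  define T1 where "T1 = {l..x0} \<inter> p -` {..0}"
  define T2 where "T2 = {x0..r} \<inter> p -` {..0}"
  have "closed T1" "closed T2" unfolding T1_def T2_def
    by (rule continuous_closed_preimage[OF continuous_on_subset[OF cp]], use x0 in auto)+
  moreover have "l \<in> T1" "r \<in> T2" using pl pr x0 unfolding T1_def T2_def by auto
  moreover have b1: "bdd_above T1" and b2: "bdd_below T2" unfolding T1_def T2_def by auto
  ultimately have "Sup T1 \<in> T1" "Inf T2 \<in> T2" by (auto intro!: closed_contains_Sup closed_contains_Inf)
  define c where "c = Sup T1"
  define d where "d = Inf T2"
  have c: "l \<le> c" "c < x0" "p c \<le> 0" and d: "x0 < d" "d \<le> r" "p d \<le> 0"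
    using \<open>Sup T1 \<in> T1\<close> \<open>Inf T2 \<in> T2\<close> x0 unfolding T1_def T2_def c_def d_def
    by (auto simp: order.order_iff_strict)
  have pos: "p x > 0" if "c < x" "x < d" for x
  proof (rule ccontr)
    assume "\<not> p x > 0"
    then have "x \<in> T1 \<or> x \<in> T2" using that c d unfolding T1_def T2_def by auto
    then show False
      using cSup_upper[OF _ b1, of x] cInf_lower[OF _ b2, of x] that unfolding c_def d_def by auto
  qed
  have "p c = 0"
  proof (rule ccontr)
    assume "p c \<noteq> 0"
    with c obtain z where "c \<le> z" "z \<le> x0" "p z = 0"
      using IVT'[of p c 0 x0] x0 continuous_on_subset[OF cp, of "{c..x0}"] by force
    with pos[of z] \<open>p c \<noteq> 0\<close> c d show False by (cases "z = c") auto
  qed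
  moreover have "p d = 0"
  proof (rule ccontr)
    assume "p d \<noteq> 0"
    with d obtain z where "x0 \<le> z" "z \<le> d" "p z = 0"
      using IVT2'[of p d 0 x0] x0 continuous_on_subset[OF cp, of "{x0..d}"] by force
    with pos[of z] \<open>p d \<noteq> 0\<close> c d show False by (cases "z = d") auto
  qed
  ultimately show ?thesis by (rule that[OF c(1,2) d(1,2)]) (use pos in auto)
qed

text \<open>\<open>p/w\<close> would rise from \<open>0\<close> and return to \<open>0\<close>, so the Wronskian
  \<open>p' w - p w'\<close> would change sign from positive to negative, although it is nondecreasing.\<close>

lemma sturm_comparison:
  fixes p w p' w' p'' w'' :: "real \<Rightarrow> real"
  assumes cd: "c < d"
    and cp: "continuous_on {c..d} p" and cw: "continuous_on {c..d} w"
    and pc: "p c = 0" and pd: "p d = 0" and ppos: "\<And>x. c < x \<Longrightarrow> x < d \<Longrightarrow> p x > 0"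
    and wpos: "\<And>x. c \<le> x \<Longrightarrow> x \<le> d \<Longrightarrow> w x > 0"
    and dp: "\<And>x. c < x \<Longrightarrow> x < d \<Longrightarrow> (p has_real_derivative p' x) (at x)"
    and dp': "\<And>x. c < x \<Longrightarrow> x < d \<Longrightarrow> (p' has_real_derivative p'' x) (at x)"
    and dw: "\<And>x. c < x \<Longrightarrow> x < d \<Longrightarrow> (w has_real_derivative w' x) (at x)"
    and dw': "\<And>x. c < x \<Longrightarrow> x < d \<Longrightarrow> (w' has_real_derivative w'' x) (at x)"
    and ineq: "\<And>x. c < x \<Longrightarrow> x < d \<Longrightarrow> p'' x * w x - p x * w'' x \<ge> 0"
  shows False
proof -
  define h where "h x = p x / w x" for x
  define W where "W x = p' x * w x - p x * w' x" for x
  define m where "m = (c + d) / 2"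
  have m: "c < m" "m < d" using cd unfolding m_def by auto
  have ch: "continuous_on {c..d} h" unfolding h_def
    using cp cw wpos by (intro continuous_on_divide) (auto, metis less_irrefl)
  have dh: "(h has_real_derivative W x / (w x)\<^sup>2) (at x)" if "c < x" "x < d" for x
    unfolding h_def W_def using dp[OF that] dw[OF that] wpos[of x] that
    by (auto intro!: derivative_eq_intros simp: power2_eq_square)
  have hm: "h m > 0" and hcd: "h c = 0" "h d = 0"
    unfolding h_def using ppos[OF m] wpos[of m] m pc pd by auto
  obtain x1 where x1: "c < x1" "x1 < m" "h m - h c = (m - c) * (W x1 / (w x1)\<^sup>2)"
    using MVT_open[OF m(1) continuous_on_subset[OF ch], of "\<lambda>x. W x / (w x)\<^sup>2"] dh m by force
  obtain x2 where x2: "m < x2" "x2 < d" "h d - h m = (d - m) * (W x2 / (w x2)\<^sup>2)"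
    using MVT_open[OF m(2) continuous_on_subset[OF ch], of "\<lambda>x. W x / (w x)\<^sup>2"] dh m by force
  have "(m - c) * (W x1 / (w x1)\<^sup>2) > 0" and "(d - m) * (W x2 / (w x2)\<^sup>2) < 0"
    using x1(3) x2(3) hm hcd by linarith+
  then have "W x1 / (w x1)\<^sup>2 > 0" and "W x2 / (w x2)\<^sup>2 < 0"
    using m by (simp_all add: zero_less_mult_iff mult_less_0_iff del: times_divide_eq_right)
  then have "W x1 > 0" and "W x2 < 0" by (simp_all add: zero_less_divide_iff divide_less_0_iff)
  moreover have "W x1 \<le> W x2"
  proof (rule DERIV_nonneg_imp_nondecreasing[of x1 x2 W])
    fix x assume "x1 \<le> x" "x \<le> x2"
    then have x: "c < x" "x < d" using x1 x2 m by auto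
    have "(W has_real_derivative p'' x * w x - p x * w'' x) (at x)"
      unfolding W_def using dp[OF x] dp'[OF x] dw[OF x] dw'[OF x]
      by (auto intro!: derivative_eq_intros simp: algebra_simps)
    then show "\<exists>y. DERIV W x :> y \<and> y \<ge> 0" using ineq[OF x] by blast
  qed (use x1 x2 in auto)
  ultimately show False by simp
qed

text \<open>Maximum principle against the supersolution \<open>M cosh (k (x - m)) / cosh (k h)\<close>.\<close>

lemma exponential_decay_from_convexity:
  fixes U U' U'' :: "real \<Rightarrow> real"
  assumes pq: "p < q" and k: "k > 0" and M: "M \<ge> 0"
    and dU: "\<And>x. (U has_real_derivative U' x) (at x)"
    and dU': "\<And>x. (U' has_real_derivative U'' x) (at x)"
    and ineq: "\<And>x. p \<le> x \<Longrightarrow> x \<le> q \<Longrightarrow> U'' x \<ge> k\<^sup>2 * U x"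
    and Up: "U p \<le> M" and Uq: "U q \<le> M"
  shows "U ((p + q) / 2) \<le> 2 * M * exp (- (k * ((q - p) / 2)))"
proof -
  define m where "m = (p + q) / 2"
  define h where "h = (q - p) / 2"
  define B where "B = M / cosh (k * h)"
  have ch: "cosh (k * h) > 0" using cosh_real_ge_1[of "k * h"] by simp
  define g where "g x = U x - B * cosh (k * (x - m))" for x
  define g' where "g' x = U' x - B * (sinh (k * (x - m)) * k)" for x
  define g'' where "g'' x = U'' x - B * (cosh (k * (x - m)) * k * k)" for x
  have dg: "(g has_real_derivative g' x) (at x)" and dg': "(g' has_real_derivative g'' x) (at x)" for x
    unfolding g_def g'_def g''_def using dU[of x] dU'[of x] by (auto intro!: derivative_eq_intros)
  have "k * (p - m) = - (k * h)" "k * (q - m) = k * h" unfolding m_def h_def by (simp_all add: field_simps)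
  then have cosh_ends: "cosh (k * (p - m)) = cosh (k * h)" "cosh (k * (q - m)) = cosh (k * h)"
    by (simp_all only: cosh_minus)
  have gpq: "g p \<le> 0" "g q \<le> 0" unfolding g_def B_def cosh_ends using Up Uq ch by simp_all
  have cg: "continuous_on {p..q} g" using dg by (intro has_real_derivative_imp_continuous_on) blast
  obtain x0 where x0: "x0 \<in> {p..q}" "\<And>y. y \<in> {p..q} \<Longrightarrow> g y \<le> g x0"
    using continuous_attains_sup[OF compact_Icc _ cg] pq by auto
  have "g x0 \<le> 0"
  proof (rule ccontr)
    assume "\<not> g x0 \<le> 0"
    then have pos: "g x0 > 0" and x0i: "p < x0" "x0 < q" using x0 gpq by (auto simp: less_le)
    have "g'' x0 \<le> 0"
      by (rule second_derivative_nonpos_at_local_max[where d = "min (x0 - p) (q - x0)", OF _ _ dg dg'])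
         (use x0 x0i in \<open>auto simp: abs_less_iff\<close>)
    moreover have "g'' x0 \<ge> k\<^sup>2 * g x0"
      using ineq[of x0] x0 unfolding g''_def g_def by (simp add: power2_eq_square algebra_simps)
    moreover have "k\<^sup>2 * g x0 > 0" using k pos by simp
    ultimately show False by simp
  qed
  moreover have "g m \<le> g x0" using x0(2)[of m] pq unfolding m_def by auto
  ultimately have "U m \<le> B" unfolding g_def by simp
  also have "B \<le> M / (exp (k * h) / 2)"
    unfolding B_def cosh_def using M by (intro divide_left_mono) (auto simp: add_pos_pos)
  also have "\<dots> = 2 * M * exp (- (k * h))" by (simp add: exp_minus field_simps)
  finally show ?thesis unfolding m_def h_def .
qed

lemma quotient_mono_if_wronskian_nonpos:
  fixes f f' U U' :: "real \<Rightarrow> real"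
  assumes "a \<le> b" and pos: "\<And>x. a \<le> x \<Longrightarrow> x \<le> b \<Longrightarrow> U x > 0"
    and df: "\<And>x. (f has_real_derivative f' x) (at x)" and dU: "\<And>x. (U has_real_derivative U' x) (at x)"
    and W: "\<And>x. a \<le> x \<Longrightarrow> x \<le> b \<Longrightarrow> U' x * f x - U x * f' x \<le> 0"
  shows "f a / U a \<le> f b / U b"
proof (rule DERIV_nonneg_imp_nondecreasing[OF \<open>a \<le> b\<close>])
  fix x assume x: "a \<le> x" "x \<le> b"
  have "((\<lambda>s. f s / U s) has_real_derivative - (U' x * f x - U x * f' x) / (U x * U x)) (at x)"
    using DERIV_divide[OF df dU, of x] pos[OF x] by (simp add: algebra_simps)
  moreover have "- (U' x * f x - U x * f' x) / (U x * U x) \<ge> 0"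
    using W[OF x] pos[OF x] by (intro divide_nonneg_pos) auto
  ultimately show "\<exists>y. DERIV (\<lambda>s. f s / U s) x :> y \<and> y \<ge> 0" by blast
qed

text \<open>Compare \<open>U\<close> with the parabola \<open>U t0 (1 - w (s - t0))\<^sup>2\<close>, whose second derivative dominates
  \<open>K\<close> times itself and which vanishes at \<open>t0 + 1/w\<close>: if \<open>U\<close> started out steeper downwards,
  the quotient of the parabola by \<open>U\<close> would be nondecreasing, yet it drops from \<open>1\<close> to \<open>0\<close>.\<close>

lemma log_derivative_lower_bound:
  fixes U U' U'' :: "real \<Rightarrow> real"
  assumes w: "w > 0" and K: "K \<le> 2 * w\<^sup>2"
    and Upos: "\<And>x. t0 \<le> x \<Longrightarrow> x \<le> t0 + 1 / w \<Longrightarrow> U x > 0"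
    and dU: "\<And>x. (U has_real_derivative U' x) (at x)"
    and dU': "\<And>x. (U' has_real_derivative U'' x) (at x)"
    and ineq: "\<And>x. t0 \<le> x \<Longrightarrow> x \<le> t0 + 1 / w \<Longrightarrow> U'' x \<le> K * U x"
  shows "U' t0 > - 2 * w * U t0"
proof (rule ccontr)
  assume "\<not> U' t0 > - 2 * w * U t0"
  then have hyp: "U' t0 + 2 * w * U t0 \<le> 0" by simp
  define t1 where "t1 = t0 + 1 / w"
  have t01: "t0 < t1" unfolding t1_def using w by simp
  define c0 where "c0 = U t0"
  have c0: "c0 > 0" unfolding c0_def using Upos[of t0] w by simp
  define \<phi> where "\<phi> s = c0 * (1 - w * (s - t0))\<^sup>2" for s
  define \<phi>' where "\<phi>' s = - 2 * w * c0 * (1 - w * (s - t0))" for s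
  have d\<phi>: "(\<phi> has_real_derivative \<phi>' s) (at s)" and d\<phi>': "(\<phi>' has_real_derivative 2 * w\<^sup>2 * c0) (at s)" for s
    unfolding \<phi>_def \<phi>'_def by (auto intro!: derivative_eq_intros simp: power2_eq_square algebra_simps)
  have \<phi>_bounds: "0 \<le> \<phi> s \<and> \<phi> s \<le> c0" if "t0 \<le> s" "s \<le> t1" for s
  proof -
    have "0 \<le> 1 - w * (s - t0)" "1 - w * (s - t0) \<le> 1"
      using that w unfolding t1_def by (auto simp: field_simps)
    then show ?thesis unfolding \<phi>_def using c0 by (simp add: mult_left_le power_le_one)
  qed
  define W where "W s = U' s * \<phi> s - U s * \<phi>' s" for s
  have W_nonpos: "W s \<le> 0" if s: "t0 \<le> s" "s \<le> t1" for s
  proof -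
    have "W s \<le> W t0"
    proof (rule DERIV_nonpos_imp_nonincreasing[OF s(1)])
      fix x assume x: "t0 \<le> x" "x \<le> s"
      then have xt: "t0 \<le> x" "x \<le> t0 + 1 / w" using s unfolding t1_def by auto
      have "(W has_real_derivative U'' x * \<phi> x - U x * (2 * w\<^sup>2 * c0)) (at x)"
        unfolding W_def using dU[of x] dU'[of x] d\<phi>[of x] d\<phi>'[of x]
        by (auto intro!: derivative_eq_intros simp: algebra_simps)
      moreover have "U'' x * \<phi> x \<le> U x * (2 * w\<^sup>2 * c0)"
      proof -
        have "U'' x * \<phi> x \<le> K * U x * \<phi> x"
          using ineq[OF xt] \<phi>_bounds[of x] x s by (intro mult_right_mono) auto
        also have "\<dots> = U x * (K * \<phi> x)" by simp
        also have "\<dots> \<le> U x * (2 * w\<^sup>2 * c0)"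
        proof (rule mult_left_mono)
          have "K * \<phi> x \<le> 2 * w\<^sup>2 * \<phi> x" using K \<phi>_bounds[of x] x s by (intro mult_right_mono) auto
          also have "\<dots> \<le> 2 * w\<^sup>2 * c0" using \<phi>_bounds[of x] x s by (intro mult_left_mono) auto
          finally show "K * \<phi> x \<le> 2 * w\<^sup>2 * c0" .
        qed (use Upos[OF xt] in simp)
        finally show ?thesis .
      qed
      ultimately show "\<exists>y. DERIV W x :> y \<and> y \<le> 0" by force
    qed
    moreover have "W t0 = c0 * (U' t0 + 2 * w * U t0)"
      unfolding W_def \<phi>_def \<phi>'_def c0_def by (simp add: algebra_simps)
    moreover have "c0 * (U' t0 + 2 * w * U t0) \<le> 0" using c0 hyp by (simp add: mult_nonneg_nonpos)
    ultimately show ?thesis by simp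
  qed
  have "\<phi> t0 / U t0 \<le> \<phi> t1 / U t1"
    by (rule quotient_mono_if_wronskian_nonpos[OF less_imp_le[OF t01] _ d\<phi> dU])
       (use Upos W_nonpos in \<open>auto simp: t1_def W_def\<close>)
  moreover have "\<phi> t0 / U t0 = 1" "\<phi> t1 / U t1 = 0"
    unfolding \<phi>_def t1_def c0_def using c0 c0_def w by simp_all
  ultimately show False by simp
qed

lemma log_derivative_upper_bound:
  fixes U U' U'' :: "real \<Rightarrow> real"
  assumes w: "w > 0" and K: "K \<le> 2 * w\<^sup>2"
    and Upos: "\<And>x. t0 - 1 / w \<le> x \<Longrightarrow> x \<le> t0 \<Longrightarrow> U x > 0"
    and dU: "\<And>x. (U has_real_derivative U' x) (at x)"
    and dU': "\<And>x. (U' has_real_derivative U'' x) (at x)"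
    and ineq: "\<And>x. t0 - 1 / w \<le> x \<Longrightarrow> x \<le> t0 \<Longrightarrow> U'' x \<le> K * U x"
  shows "U' t0 < 2 * w * U t0"
proof -
  have "- U' (- (- t0)) > - 2 * w * U (- (- t0))"
  proof (rule log_derivative_lower_bound[OF w K, where U = "\<lambda>x. U (- x)"])
    show "((\<lambda>x. U (- x)) has_real_derivative - U' (- x)) (at x)" for x
      using DERIV_mirror[where f = U and x = x and y = "U' (- x)"] dU[of "- x"] by simp
    show "((\<lambda>x. - U' (- x)) has_real_derivative U'' (- x)) (at x)" for x
      using DERIV_minus[OF iffD1[OF DERIV_mirror[where f = U' and x = x and y = "U'' (- x)"] dU'[of "- x"]]] by simp
  qed (use Upos ineq in auto)
  then show ?thesis by simp
qed

lemma harnack_inequality: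
  fixes U U' U'' :: "real \<Rightarrow> real"
  assumes w: "w > 0" and K: "K \<le> 2 * w\<^sup>2"
    and Upos: "\<And>x. \<alpha> - 1 / w \<le> x \<Longrightarrow> x \<le> \<beta> + 1 / w \<Longrightarrow> U x > 0"
    and dU: "\<And>x. (U has_real_derivative U' x) (at x)"
    and dU': "\<And>x. (U' has_real_derivative U'' x) (at x)"
    and ineq: "\<And>x. \<alpha> - 1 / w \<le> x \<Longrightarrow> x \<le> \<beta> + 1 / w \<Longrightarrow> U'' x \<le> K * U x"
    and x: "x \<in> {\<alpha>..\<beta>}" and y: "y \<in> {\<alpha>..\<beta>}"
  shows "U x \<ge> exp (- (2 * w * \<bar>x - y\<bar>)) * U y"
proof -
  have iw: "0 < 1 / w" using w by simp
  have Ut: "U t > 0" if "t \<in> {\<alpha>..\<beta>}" for t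
  proof -
    have "\<alpha> - 1 / w \<le> t" "t \<le> \<beta> + 1 / w" using that iw unfolding atLeastAtMost_iff by linarith+
    then show ?thesis by (rule Upos)
  qed
  have dlog: "((\<lambda>t. ln (U t)) has_real_derivative U' t / U t) (at t within {\<alpha>..\<beta>})"
    if "t \<in> {\<alpha>..\<beta>}" for t
    using Ut[OF that] has_field_derivative_at_within[OF dU[of t]]
    by (auto intro!: derivative_eq_intros simp: field_simps)
  have "\<bar>U' t / U t\<bar> \<le> 2 * w" if t: "t \<in> {\<alpha>..\<beta>}" for t
  proof -
    have "U' t > - 2 * w * U t"
      by (rule log_derivative_lower_bound[OF w K _ dU dU']) (use t in \<open>auto intro!: Upos ineq\<close>)
    moreover have "U' t < 2 * w * U t"
      by (rule log_derivative_upper_bound[OF w K _ dU dU']) (use t in \<open>auto intro!: Upos ineq\<close>)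
    ultimately show ?thesis using Ut[OF t] by (auto simp: abs_le_iff field_simps)
  qed
  then have "\<bar>ln (U y) - ln (U x)\<bar> \<le> 2 * w * \<bar>y - x\<bar>"
    using field_differentiable_bound[OF convex_real_interval(5) dlog, of "2 * w" y x] x y by simp
  then have "ln (U y) - 2 * w * \<bar>x - y\<bar> \<le> ln (U x)" by (simp add: abs_minus_commute abs_le_iff)
  then have "exp (ln (U y) - 2 * w * \<bar>x - y\<bar>) \<le> U x" using Ut[OF x] by (metis exp_le_cancel_iff exp_ln)
  then show ?thesis using Ut[OF y] by (simp add: exp_diff exp_minus field_simps)
qed

section \<open>Shooting for the Dirichlet problem\<close>

lemma two_mult_le_sum_squares_scaled:
  fixes a b q Q :: real
  assumes "\<bar>q\<bar> \<le> Q"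
  shows "2 * a * q * b \<le> Q * (a\<^sup>2 + b\<^sup>2)"
proof -
  have "2 * a * q * b \<le> \<bar>q\<bar> * (2 * \<bar>a\<bar> * \<bar>b\<bar>)" by (simp add: abs_mult[symmetric] mult_ac)
  also have "\<dots> \<le> \<bar>q\<bar> * (a\<^sup>2 + b\<^sup>2)"
    using sum_squares_bound[of "\<bar>a\<bar>" "\<bar>b\<bar>"] by (intro mult_left_mono) auto
  also have "\<dots> \<le> Q * (a\<^sup>2 + b\<^sup>2)" using assms by (intro mult_right_mono) auto
  finally show ?thesis .
qed

lemma energy_estimate:
  fixes D F a g :: "real \<Rightarrow> real"
  assumes lx: "l \<le> x" and cD: "continuous_on {l..x} D" and cF: "continuous_on {l..x} F"
    and dD: "\<And>t. l < t \<Longrightarrow> t < x \<Longrightarrow> (D has_real_derivative F t) (at t)"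
    and dF: "\<And>t. l < t \<Longrightarrow> t < x \<Longrightarrow> (F has_real_derivative a t * D t + g t) (at t)"
    and a: "\<And>t. l < t \<Longrightarrow> t < x \<Longrightarrow> \<bar>a t\<bar> \<le> A" and A: "A \<ge> 0"
    and g: "\<And>t. l < t \<Longrightarrow> t < x \<Longrightarrow> \<bar>g t\<bar> \<le> G"
  shows "(D x)\<^sup>2 + (F x)\<^sup>2 \<le> ((D l)\<^sup>2 + (F l)\<^sup>2 + G\<^sup>2) * exp ((2 + A) * (x - l))"
proof -
  define K where "K = 2 + A"
  have K: "K \<ge> 1" unfolding K_def using A by simp
  define E where "E t = (D t)\<^sup>2 + (F t)\<^sup>2" for t
  have "E x \<le> (E l + G\<^sup>2 / K) * exp (K * (x - l)) - G\<^sup>2 / K"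
  proof (rule gronwall_affine[OF lx])
    show "continuous_on {l..x} E" unfolding E_def using cD cF by (intro continuous_intros)
    fix t assume t: "l < t" "t < x"
    show "(E has_real_derivative 2 * D t * F t + 2 * F t * (a t * D t + g t)) (at t)"
      unfolding E_def using dD[OF t] dF[OF t]
      by (auto intro!: derivative_eq_intros simp: algebra_simps)
    have "2 * D t * F t \<le> (D t)\<^sup>2 + (F t)\<^sup>2" by (rule sum_squares_bound)
    moreover have "2 * D t * a t * F t \<le> A * ((D t)\<^sup>2 + (F t)\<^sup>2)"
      by (rule two_mult_le_sum_squares_scaled[OF a[OF t]])
    moreover have "2 * F t * g t \<le> (F t)\<^sup>2 + (g t)\<^sup>2" by (rule sum_squares_bound)
    moreover have "(g t)\<^sup>2 \<le> G\<^sup>2" using g[OF t] by (metis abs_le_square_iff abs_of_nonneg abs_ge_zero order_trans)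
    ultimately show "2 * D t * F t + 2 * F t * (a t * D t + g t) \<le> K * E t + G\<^sup>2"
      unfolding K_def E_def by (simp add: algebra_simps) (use zero_le_power2[of "D t"] in linarith)
  qed (use K in simp)
  also have "\<dots> \<le> (E l + G\<^sup>2) * exp (K * (x - l))"
  proof -
    have "G\<^sup>2 / K \<le> G\<^sup>2" and "0 \<le> G\<^sup>2 / K" using K mult_left_mono[OF K, of "G\<^sup>2"] by (simp_all add: divide_le_eq)
    then have "(E l + G\<^sup>2 / K) * exp (K * (x - l)) \<le> (E l + G\<^sup>2) * exp (K * (x - l))"
      by (intro mult_right_mono) auto
    with \<open>0 \<le> G\<^sup>2 / K\<close> show ?thesis by linarith
  qed
  finally show ?thesis unfolding E_def K_def .
qed

definition shooting_coeff :: "real \<Rightarrow> (real \<Rightarrow> real) \<Rightarrow> real \<Rightarrow> real \<Rightarrow> real" where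
  "shooting_coeff \<epsilon> V \<nu> t = (V t - \<nu>) / (2 * \<epsilon>\<^sup>2)"

lemma shooting_coeff_mult_le_iff:
  "\<epsilon> > 0 \<Longrightarrow> shooting_coeff \<epsilon> V \<mu> x * f \<le> g \<longleftrightarrow> (V x - \<mu>) * f \<le> 2 * \<epsilon>\<^sup>2 * g"
  unfolding shooting_coeff_def by (simp add: field_simps)

text \<open>\<open>Y \<nu>\<close> solves \<open>- 2 \<epsilon>\<^sup>2 y'' + V y = \<nu> y\<close>, \<open>y l = 0\<close>, \<open>y' l = 1\<close>, and \<open>Z \<nu>\<close> is its derivative.
  Both are constructed on \<open>[l, r + 1]\<close>, so that they are differentiable at \<open>r\<close>.\<close>

locale shooting =
  fixes \<epsilon> :: real and V :: "real \<Rightarrow> real" and l r :: real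
  assumes eps: "\<epsilon> > 0" and V_cont: "continuous_on UNIV V" and lr: "l < r"
begin

abbreviation "R \<equiv> r + 1"
abbreviation "q \<equiv> shooting_coeff \<epsilon> V"

definition shot :: "real \<Rightarrow> (real \<Rightarrow> real) \<times> (real \<Rightarrow> real)" where
  "shot \<nu> = (SOME p. fst p l = 0 \<and> snd p l = 1 \<and> (\<forall>x\<in>{l..R}.
      (fst p has_real_derivative snd p x) (at x within {l..R}) \<and>
      (snd p has_real_derivative q \<nu> x * fst p x) (at x within {l..R})))"

definition "Y \<nu> = fst (shot \<nu>)"
definition "Z \<nu> = snd (shot \<nu>)"

lemma continuous_on_q: "continuous_on S (q \<nu>)"
  unfolding shooting_coeff_def using eps
  by (intro continuous_intros continuous_on_subset[OF V_cont]) auto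

lemma shot_ivp:
  "Y \<nu> l = 0" "Z \<nu> l = 1"
  "x \<in> {l..R} \<Longrightarrow> (Y \<nu> has_real_derivative Z \<nu> x) (at x within {l..R})"
  "x \<in> {l..R} \<Longrightarrow> (Z \<nu> has_real_derivative q \<nu> x * Y \<nu> x) (at x within {l..R})"
proof -
  obtain y z where "y l = 0 \<and> z l = 1 \<and> (\<forall>x\<in>{l..R}. (y has_real_derivative z x) (at x within {l..R}) \<and>
      (z has_real_derivative q \<nu> x * y x) (at x within {l..R}))"
    using linear_ode_exists[of l R "q \<nu>"] lr continuous_on_q by auto
  then have "\<exists>p. fst p l = 0 \<and> snd p l = 1 \<and> (\<forall>x\<in>{l..R}.
      (fst p has_real_derivative snd p x) (at x within {l..R}) \<and>
      (snd p has_real_derivative q \<nu> x * fst p x) (at x within {l..R}))"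
    by (intro exI[of _ "(y, z)"]) simp
  from someI_ex[OF this] show "Y \<nu> l = 0" "Z \<nu> l = 1"
    "x \<in> {l..R} \<Longrightarrow> (Y \<nu> has_real_derivative Z \<nu> x) (at x within {l..R})"
    "x \<in> {l..R} \<Longrightarrow> (Z \<nu> has_real_derivative q \<nu> x * Y \<nu> x) (at x within {l..R})"
    unfolding Y_def Z_def shot_def by auto
qed

lemma Y_deriv: "l < x \<Longrightarrow> x < R \<Longrightarrow> (Y \<nu> has_real_derivative Z \<nu> x) (at x)"
  and Z_deriv: "l < x \<Longrightarrow> x < R \<Longrightarrow> (Z \<nu> has_real_derivative q \<nu> x * Y \<nu> x) (at x)"
  using shot_ivp(3,4)[of x \<nu>] at_within_Icc_at[of l x R] by auto

lemma continuous_on_Y: "S \<subseteq> {l..R} \<Longrightarrow> continuous_on S (Y \<nu>)"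
  and continuous_on_Z: "S \<subseteq> {l..R} \<Longrightarrow> continuous_on S (Z \<nu>)"
  using DERIV_continuous_on[OF shot_ivp(3)] DERIV_continuous_on[OF shot_ivp(4)] continuous_on_subset by blast+

lemma q_diff: "q \<nu> t - q \<mu> t = (\<mu> - \<nu>) / (2 * \<epsilon>\<^sup>2)"
  unfolding shooting_coeff_def by (simp add: diff_divide_distrib[symmetric])

lemma wronskian_deriv:
  assumes "l < x" "x < R"
  shows "((\<lambda>x. Z \<nu> x * Y \<mu> x - Y \<nu> x * Z \<mu> x) has_real_derivative
           (\<mu> - \<nu>) / (2 * \<epsilon>\<^sup>2) * Y \<nu> x * Y \<mu> x) (at x)"
proof -
  have "(\<mu> - \<nu>) / (2 * \<epsilon>\<^sup>2) * Y \<nu> x * Y \<mu> x =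
      q \<nu> x * Y \<nu> x * Y \<mu> x + Z \<mu> x * Z \<nu> x - (Z \<nu> x * Z \<mu> x + q \<mu> x * Y \<mu> x * Y \<nu> x)"
    unfolding q_diff[of \<nu> x \<mu>, symmetric] by (simp add: algebra_simps)
  with DERIV_diff[OF DERIV_mult[OF Z_deriv[OF assms, of \<nu>] Y_deriv[OF assms, of \<mu>]]
                    DERIV_mult[OF Y_deriv[OF assms, of \<nu>] Z_deriv[OF assms, of \<mu>]]]
  show ?thesis by simp
qed

lemma q_bounded:
  obtains Q where "Q \<ge> 0" "\<And>\<nu> t. \<nu> \<in> {\<nu>1..\<nu>2} \<Longrightarrow> t \<in> {l..R} \<Longrightarrow> \<bar>q \<nu> t\<bar> \<le> Q"
proof -
  obtain B where "\<And>t. t \<in> {l..R} \<Longrightarrow> \<bar>V t\<bar> \<le> B"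
    using continuous_on_compact_bound[OF compact_Icc continuous_on_subset[OF V_cont subset_UNIV]]
    by (metis real_norm_def)
  then have "\<bar>q \<nu> t\<bar> \<le> (B + \<bar>\<nu>1\<bar> + \<bar>\<nu>2\<bar>) / (2 * \<epsilon>\<^sup>2)" if "\<nu> \<in> {\<nu>1..\<nu>2}" "t \<in> {l..R}" for \<nu> t
  proof -
    have "\<bar>V t - \<nu>\<bar> \<le> B + \<bar>\<nu>1\<bar> + \<bar>\<nu>2\<bar>" using that \<open>\<And>t. t \<in> {l..R} \<Longrightarrow> \<bar>V t\<bar> \<le> B\<close>[OF that(2)] by auto
    then show ?thesis by (simp add: shooting_coeff_def abs_divide divide_right_mono)
  qed
  moreover have "(B + \<bar>\<nu>1\<bar> + \<bar>\<nu>2\<bar>) / (2 * \<epsilon>\<^sup>2) \<ge> 0" using \<open>\<And>t. t \<in> {l..R} \<Longrightarrow> \<bar>V t\<bar> \<le> B\<close>[of l] lr by simp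
  ultimately show ?thesis by (rule that[rotated])
qed

lemma shot_bounded:
  obtains S where "S > 0" "\<And>\<nu> x. \<nu> \<in> {\<nu>1..\<nu>2} \<Longrightarrow> x \<in> {l..R} \<Longrightarrow> \<bar>Y \<nu> x\<bar> \<le> S"
proof -
  obtain Q where Q: "Q \<ge> 0" "\<And>\<nu> t. \<nu> \<in> {\<nu>1..\<nu>2} \<Longrightarrow> t \<in> {l..R} \<Longrightarrow> \<bar>q \<nu> t\<bar> \<le> Q"
    using q_bounded by blast
  define S where "S = exp ((2 + Q) * (R - l))"
  have "\<bar>Y \<nu> x\<bar> \<le> S" if \<nu>: "\<nu> \<in> {\<nu>1..\<nu>2}" and x: "x \<in> {l..R}" for \<nu> x
  proof -
    have "(Y \<nu> x)\<^sup>2 + (Z \<nu> x)\<^sup>2 \<le> ((Y \<nu> l)\<^sup>2 + (Z \<nu> l)\<^sup>2 + 0\<^sup>2) * exp ((2 + Q) * (x - l))"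
      by (rule energy_estimate[where a = "q \<nu>" and g = "\<lambda>_. 0"])
        (use x \<nu> Q in \<open>auto intro!: continuous_on_Y continuous_on_Z Y_deriv Z_deriv\<close>)
    also have "\<dots> \<le> S" unfolding S_def shot_ivp using x Q by (auto intro!: mult_left_mono)
    also have "S \<le> S\<^sup>2" unfolding S_def using Q lr by (simp add: power2_eq_square)
    finally have "(Y \<nu> x)\<^sup>2 \<le> S\<^sup>2" by (smt (verit) zero_le_power2)
    then show ?thesis unfolding S_def by (simp add: abs_le_square_iff[symmetric])
  qed
  moreover have "S > 0" by (simp add: S_def)
  ultimately show ?thesis using that by blast
qed

lemma shot_lipschitz:
  obtains L where "L \<ge> 0" "\<And>\<nu> \<mu> x. \<nu> \<in> {\<nu>1..\<nu>2} \<Longrightarrow> \<mu> \<in> {\<nu>1..\<nu>2} \<Longrightarrow> x \<in> {l..R} \<Longrightarrow>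
     \<bar>Y \<nu> x - Y \<mu> x\<bar> \<le> L * \<bar>\<nu> - \<mu>\<bar>"
proof -
  obtain Q where Q: "Q \<ge> 0" "\<And>\<nu> t. \<nu> \<in> {\<nu>1..\<nu>2} \<Longrightarrow> t \<in> {l..R} \<Longrightarrow> \<bar>q \<nu> t\<bar> \<le> Q"
    using q_bounded by blast
  obtain S where S: "S > 0" "\<And>\<nu> x. \<nu> \<in> {\<nu>1..\<nu>2} \<Longrightarrow> x \<in> {l..R} \<Longrightarrow> \<bar>Y \<nu> x\<bar> \<le> S"
    using shot_bounded by blast
  define L where "L = S * exp ((2 + Q) * (R - l)) / (2 * \<epsilon>\<^sup>2)"
  have "\<bar>Y \<nu> x - Y \<mu> x\<bar> \<le> L * \<bar>\<nu> - \<mu>\<bar>"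
    if \<nu>: "\<nu> \<in> {\<nu>1..\<nu>2}" "\<mu> \<in> {\<nu>1..\<nu>2}" and x: "x \<in> {l..R}" for \<nu> \<mu> x
  proof -
    define c where "c = (\<mu> - \<nu>) / (2 * \<epsilon>\<^sup>2)"
    have "(Y \<nu> x - Y \<mu> x)\<^sup>2 + (Z \<nu> x - Z \<mu> x)\<^sup>2 \<le>
            ((Y \<nu> l - Y \<mu> l)\<^sup>2 + (Z \<nu> l - Z \<mu> l)\<^sup>2 + (\<bar>c\<bar> * S)\<^sup>2) * exp ((2 + Q) * (x - l))"
    proof (rule energy_estimate[where a = "q \<nu>" and g = "\<lambda>t. c * Y \<mu> t"])
      fix t assume t: "l < t" "t < x"
      have "q \<nu> t * Y \<nu> t - q \<mu> t * Y \<mu> t = q \<nu> t * (Y \<nu> t - Y \<mu> t) + (q \<nu> t - q \<mu> t) * Y \<mu> t"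
        by (simp add: algebra_simps)
      then show "((\<lambda>t. Z \<nu> t - Z \<mu> t) has_real_derivative q \<nu> t * (Y \<nu> t - Y \<mu> t) + c * Y \<mu> t) (at t)"
        using DERIV_diff[OF Z_deriv[of t \<nu>] Z_deriv[of t \<mu>]] t x unfolding c_def q_diff by simp
      show "\<bar>c * Y \<mu> t\<bar> \<le> \<bar>c\<bar> * S" using S(2)[OF \<nu>(2), of t] t x
        by (auto simp: abs_mult intro!: mult_left_mono)
    qed (use x \<nu> Q in \<open>auto intro!: continuous_intros continuous_on_Y continuous_on_Z
                                  derivative_eq_intros Y_deriv\<close>)
    also have "\<dots> \<le> (c * S * exp ((2 + Q) * (R - l)))\<^sup>2"
    proof -
      have "exp ((2 + Q) * (x - l)) \<le> exp ((2 + Q) * (R - l))" using x Q by (auto intro!: mult_left_mono)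
      also have "\<dots> \<le> (exp ((2 + Q) * (R - l)))\<^sup>2" using Q lr by (simp add: power2_eq_square)
      finally show ?thesis unfolding shot_ivp by (simp add: power_mult_distrib mult_left_mono)
    qed
    finally have "(Y \<nu> x - Y \<mu> x)\<^sup>2 \<le> (c * S * exp ((2 + Q) * (R - l)))\<^sup>2"
      by (smt (verit) zero_le_power2)
    then have "\<bar>Y \<nu> x - Y \<mu> x\<bar> \<le> \<bar>c * S * exp ((2 + Q) * (R - l))\<bar>"
      by (simp add: abs_le_square_iff)
    also have "\<dots> = L * \<bar>\<nu> - \<mu>\<bar>"
      using S(1) by (simp add: c_def L_def abs_mult abs_divide abs_minus_commute)
    finally show ?thesis .
  qed
  moreover have "L \<ge> 0" using S(1) by (simp add: L_def)
  ultimately show ?thesis using that by blast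
qed

lemma shot_pos_near_l:
  obtains \<delta> where "\<delta> > 0" "\<delta> \<le> r - l" "\<And>\<nu> x. \<nu> \<in> {\<nu>1..\<nu>2} \<Longrightarrow> l < x \<Longrightarrow> x \<le> l + \<delta> \<Longrightarrow> Y \<nu> x > 0"
proof -
  obtain Q where Q: "Q \<ge> 0" "\<And>\<nu> t. \<nu> \<in> {\<nu>1..\<nu>2} \<Longrightarrow> t \<in> {l..R} \<Longrightarrow> \<bar>q \<nu> t\<bar> \<le> Q"
    using q_bounded by blast
  obtain S where S: "S > 0" "\<And>\<nu> x. \<nu> \<in> {\<nu>1..\<nu>2} \<Longrightarrow> x \<in> {l..R} \<Longrightarrow> \<bar>Y \<nu> x\<bar> \<le> S"
    using shot_bounded by blast
  have QS: "Q * S \<ge> 0" using Q S by simp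
  define \<delta> where "\<delta> = min (r - l) (1 / (2 * (Q * S) + 1))"
  have \<delta>: "\<delta> > 0" "\<delta> \<le> r - l" using lr QS by (auto simp: \<delta>_def)
  have "\<delta> * (Q * S) \<le> 1 / (2 * (Q * S) + 1) * (Q * S)"
    using QS by (intro mult_right_mono) (auto simp: \<delta>_def)
  also have "\<dots> \<le> 1 / 2" using QS by (simp add: field_simps)
  finally have \<delta>_small: "\<delta> * (Q * S) \<le> 1 / 2" .
  have Z_half: "Z \<nu> t \<ge> 1 / 2" if \<nu>: "\<nu> \<in> {\<nu>1..\<nu>2}" and t: "l < t" "t \<le> l + \<delta>" for \<nu> t
  proof -
    obtain z where z: "l < z" "z < t" "Z \<nu> t - Z \<nu> l = (t - l) * (q \<nu> z * Y \<nu> z)"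
      using MVT_open[OF t(1) continuous_on_Z, of \<nu> "\<lambda>z. q \<nu> z * Y \<nu> z"] t \<delta> lr Z_deriv by force
    have "\<bar>(t - l) * (q \<nu> z * Y \<nu> z)\<bar> \<le> \<delta> * (Q * S)"
      unfolding abs_mult using t z \<delta> Q(2)[OF \<nu>, of z] S(2)[OF \<nu>, of z] Q(1)
      by (intro mult_mono) auto
    then show ?thesis using z(3) \<delta>_small shot_ivp(2)[of \<nu>] by (simp add: abs_le_iff)
  qed
  have "Y \<nu> x > 0" if \<nu>: "\<nu> \<in> {\<nu>1..\<nu>2}" and x: "l < x" "x \<le> l + \<delta>" for \<nu> x
  proof -
    obtain z where z: "l < z" "z < x" "Y \<nu> x - Y \<nu> l = (x - l) * Z \<nu> z"
      using MVT_open[OF x(1) continuous_on_Y, of \<nu> "Z \<nu>"] x \<delta> lr Y_deriv by force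
    with Z_half[OF \<nu> z(1)] x shot_ivp(1)[of \<nu>] show ?thesis by simp
  qed
  with \<delta> show ?thesis by (intro that) auto
qed

definition positive_shot :: "real \<Rightarrow> bool" where
  "positive_shot \<nu> \<longleftrightarrow> (\<forall>x. l < x \<and> x \<le> r \<longrightarrow> Y \<nu> x > 0)"

lemma first_zero_of_shot:
  assumes "\<not> positive_shot \<nu>"
  obtains t where "l < t" "t \<le> r" "Y \<nu> t = 0" "\<And>x. l < x \<Longrightarrow> x < t \<Longrightarrow> Y \<nu> x > 0"
proof -
  obtain x0 where x0: "l < x0" "x0 \<le> r" "Y \<nu> x0 \<le> 0" using assms unfolding positive_shot_def by force
  obtain \<delta> where "\<delta> > 0" "\<And>x. l < x \<Longrightarrow> x \<le> l + \<delta> \<Longrightarrow> Y \<nu> x > 0"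
  proof -
    obtain \<delta> where "\<delta> > 0" "\<And>\<mu> x. \<mu> \<in> {\<nu>..\<nu>} \<Longrightarrow> l < x \<Longrightarrow> x \<le> l + \<delta> \<Longrightarrow> Y \<mu> x > 0"
      using shot_pos_near_l by blast
    then show thesis using that[of \<delta>] by auto
  qed
  with x0 obtain t where "l < t" "t \<le> x0" "Y \<nu> t = 0" "\<And>x. l < x \<Longrightarrow> x < t \<Longrightarrow> Y \<nu> x > 0"
    using first_zero_after[of l x0 "Y \<nu>" \<delta>] continuous_on_Y[of "{l..x0}" \<nu>] by auto
  with x0 show ?thesis by (intro that) auto
qed

lemma positive_shot_if_potential_ge:
  assumes "\<And>t. l \<le> t \<Longrightarrow> t \<le> r \<Longrightarrow> V t \<ge> \<nu>"
  shows "positive_shot \<nu>"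
proof (rule ccontr)
  assume "\<not> positive_shot \<nu>"
  then obtain t where t: "l < t" "t \<le> r" "Y \<nu> t = 0" "\<And>x. l < x \<Longrightarrow> x < t \<Longrightarrow> Y \<nu> x > 0"
    by (rule first_zero_of_shot) auto
  have "Z \<nu> l \<le> Z \<nu> x" if x: "l < x" "x < t" for x
  proof (rule DERIV_nonneg_imp_increasing_open[of l x])
    fix y assume y: "l < y" "y < x"
    have "Y \<nu> y > 0" using t(4)[of y] y x by simp
    moreover have "q \<nu> y \<ge> 0" using assms[of y] y x t eps unfolding shooting_coeff_def by simp
    ultimately have "q \<nu> y * Y \<nu> y \<ge> 0" by simp
    then show "\<exists>d. DERIV (Z \<nu>) y :> d \<and> 0 \<le> d" using Z_deriv[of y \<nu>] y x t by force
  qed (use x t in \<open>auto intro!: continuous_on_Z\<close>)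
  moreover obtain z where "l < z" "z < t" "Y \<nu> t - Y \<nu> l = (t - l) * Z \<nu> z"
    using MVT_open[OF t(1) continuous_on_Y, of \<nu> "Z \<nu>"] t Y_deriv by force
  ultimately show False using t shot_ivp(1,2)[of \<nu>] by (smt (verit) mult_pos_pos)
qed

lemma positive_shot_antimono:
  assumes "\<mu> < \<nu>" and "positive_shot \<nu>"
  shows "positive_shot \<mu>"
proof (rule ccontr)
  assume "\<not> positive_shot \<mu>"
  then obtain t where t: "l < t" "t \<le> r" "Y \<mu> t = 0" "\<And>x. l < x \<Longrightarrow> x < t \<Longrightarrow> Y \<mu> x > 0"
    by (rule first_zero_of_shot) auto
  define W where "W x = Z \<mu> x * Y \<nu> x - Y \<mu> x * Z \<nu> x" for x
  have "W l < W t"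
  proof (rule DERIV_pos_imp_increasing_open[OF t(1)])
    fix x assume x: "l < x" "x < t"
    have "(\<nu> - \<mu>) / (2 * \<epsilon>\<^sup>2) * Y \<mu> x * Y \<nu> x > 0"
      using t(4)[OF x] assms x t eps unfolding positive_shot_def by (intro mult_pos_pos divide_pos_pos) auto
    then show "\<exists>y. DERIV W x :> y \<and> 0 < y" unfolding W_def using wronskian_deriv[of x] x t by force
  qed (use t in \<open>auto simp: W_def intro!: continuous_intros continuous_on_Y continuous_on_Z\<close>)
  moreover have "Y \<nu> t > 0" using assms(2) t unfolding positive_shot_def by auto
  ultimately have "Z \<mu> t > 0"
    using t shot_ivp(1)[of \<mu>] shot_ivp(1)[of \<nu>] unfolding W_def by (simp add: zero_less_mult_iff)
  then obtain h where h: "h > 0" "\<And>h'. h' > 0 \<Longrightarrow> h' < h \<Longrightarrow> Y \<mu> (t - h') < Y \<mu> t"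
    using DERIV_pos_inc_left[OF Y_deriv[of t \<mu>]] t by force
  define h' where "h' = min h (t - l) / 2"
  have h': "h' > 0" "h' < h" "l < t - h'" using h t unfolding h'_def by (auto simp: min_def field_simps)
  then have "Y \<mu> (t - h') < 0" using h(2)[of h'] t(3) by simp
  with t(4)[of "t - h'"] h' show False by simp
qed

lemma not_positive_shot_if_subsolution:
  fixes f f' f'' :: "real \<Rightarrow> real"
  assumes cd: "l < c" "c < d" "d \<le> r"
    and cf: "continuous_on {c..d} f" and fcd: "f c = 0" "f d = 0"
    and fpos: "\<And>x. c < x \<Longrightarrow> x < d \<Longrightarrow> f x > 0"
    and df: "\<And>x. c < x \<Longrightarrow> x < d \<Longrightarrow> (f has_real_derivative f' x) (at x)"
    and df': "\<And>x. c < x \<Longrightarrow> x < d \<Longrightarrow> (f' has_real_derivative f'' x) (at x)"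
    and sub: "\<And>x. c < x \<Longrightarrow> x < d \<Longrightarrow> f'' x \<ge> q \<mu> x * f x"
  shows "\<not> positive_shot \<mu>"
proof
  assume pos: "positive_shot \<mu>"
  show False
  proof (rule sturm_comparison[OF cd(2) cf continuous_on_Y fcd fpos _ df df' Y_deriv Z_deriv])
    fix x assume x: "c < x" "x < d"
    have "Y \<mu> x > 0" using pos cd x unfolding positive_shot_def by auto
    with sub[OF x] show "0 \<le> f'' x * Y \<mu> x - f x * (q \<mu> x * Y \<mu> x)"
      by (simp add: algebra_simps mult_right_mono)
  qed (use pos cd in \<open>auto simp: positive_shot_def\<close>)
qed

lemma dirichlet_eigenvalue_if_shot_vanishes:
  assumes "Y \<nu> r = 0"
  shows "\<nu> \<in> dirichlet_eigenvalues \<epsilon> V l r"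
  unfolding dirichlet_eigenvalues_def
proof (intro CollectI exI conjI)
  obtain \<delta> where \<delta>: "\<delta> > 0" "\<delta> \<le> r - l" "\<And>\<mu> x. \<mu> \<in> {\<nu>..\<nu>} \<Longrightarrow> l < x \<Longrightarrow> x \<le> l + \<delta> \<Longrightarrow> Y \<mu> x > 0"
    using shot_pos_near_l by blast
  then show "\<exists>x\<in>{l<..<r}. Y \<nu> x \<noteq> 0"
  proof (intro bexI)
    show "Y \<nu> (l + \<delta> / 2) \<noteq> 0" using \<delta>(3)[of \<nu> "l + \<delta> / 2"] \<delta>(1) by simp
  qed (use \<delta> in auto)
  show "\<forall>x\<in>{l<..<r}. (Y \<nu> has_real_derivative Z \<nu> x) (at x) \<and>
      (Z \<nu> has_real_derivative q \<nu> x * Y \<nu> x) (at x) \<and>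
      - 2 * \<epsilon>\<^sup>2 * (q \<nu> x * Y \<nu> x) + V x * Y \<nu> x = \<nu> * Y \<nu> x"
  proof (intro ballI conjI)
    fix x assume "x \<in> {l<..<r}"
    then show "(Y \<nu> has_real_derivative Z \<nu> x) (at x)" "(Z \<nu> has_real_derivative q \<nu> x * Y \<nu> x) (at x)"
      by (auto intro!: Y_deriv Z_deriv)
    show "- 2 * \<epsilon>\<^sup>2 * (q \<nu> x * Y \<nu> x) + V x * Y \<nu> x = \<nu> * Y \<nu> x"
      using eps by (simp add: shooting_coeff_def field_simps)
  qed
qed (use assms shot_ivp(1) in \<open>auto intro!: continuous_on_Y\<close>)

lemma positive_shot_open:
  assumes pos: "positive_shot \<nu>" and "\<nu> < \<mu>"
  obtains \<nu>' where "\<nu> < \<nu>'" "\<nu>' \<le> \<mu>" "positive_shot \<nu>'"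
proof -
  obtain L where L0: "L \<ge> 0" and L: "\<And>a b x. a \<in> {\<nu>..\<mu>} \<Longrightarrow> b \<in> {\<nu>..\<mu>} \<Longrightarrow> x \<in> {l..R} \<Longrightarrow>
      \<bar>Y a x - Y b x\<bar> \<le> L * \<bar>a - b\<bar>"
    using shot_lipschitz by blast
  obtain \<delta> where \<delta>: "\<delta> > 0" "\<delta> \<le> r - l" "\<And>\<nu>' x. \<nu>' \<in> {\<nu>..\<mu>} \<Longrightarrow> l < x \<Longrightarrow> x \<le> l + \<delta> \<Longrightarrow> Y \<nu>' x > 0"
    using shot_pos_near_l by blast
  obtain xm where xm: "xm \<in> {l + \<delta>..r}" "\<And>y. y \<in> {l + \<delta>..r} \<Longrightarrow> Y \<nu> xm \<le> Y \<nu> y"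
    using continuous_attains_inf[OF compact_Icc _ continuous_on_Y, of "l + \<delta>" r \<nu>] \<delta> by auto
  define m where "m = Y \<nu> xm"
  have m: "m > 0" using pos xm \<delta> unfolding m_def positive_shot_def by auto
  define \<nu>' where "\<nu>' = min \<mu> (\<nu> + m / (2 * (L + 1)))"
  have \<nu>': "\<nu> < \<nu>'" "\<nu>' \<le> \<mu>" "L * (\<nu>' - \<nu>) < m"
  proof -
    show "\<nu> < \<nu>'" "\<nu>' \<le> \<mu>" unfolding \<nu>'_def using \<open>\<nu> < \<mu>\<close> m L0 by auto
    have "L * (\<nu>' - \<nu>) \<le> L * (m / (2 * (L + 1)))" unfolding \<nu>'_def using L0 by (intro mult_left_mono) auto
    also have "\<dots> = m * (L / (2 * (L + 1)))" by simp
    also have "\<dots> < m * 1" using m L0 by (intro mult_strict_left_mono) (auto simp: field_simps)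
    finally show "L * (\<nu>' - \<nu>) < m" by simp
  qed
  have "Y \<nu>' x > 0" if x: "l < x" "x \<le> r" for x
  proof (cases "x \<le> l + \<delta>")
    case False
    then have "\<bar>Y \<nu>' x - Y \<nu> x\<bar> < m" and "m \<le> Y \<nu> x"
      using L[of \<nu>' \<nu> x] \<nu>' x xm(2)[of x] unfolding m_def by auto
    then show ?thesis by simp
  qed (use \<delta> \<nu>' x in auto)
  with \<nu>' show ?thesis by (intro that) (auto simp: positive_shot_def)
qed

lemma shot_nonneg_if_approximated:
  assumes approx: "\<And>\<eta>. \<eta> > 0 \<Longrightarrow> \<exists>\<nu>'\<in>{\<nu> - \<eta>..\<nu>}. positive_shot \<nu>'" and x: "l < x" "x \<le> r"
  shows "Y \<nu> x \<ge> 0"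
proof (rule ccontr)
  assume "\<not> Y \<nu> x \<ge> 0"
  obtain L where L0: "L \<ge> 0" and L: "\<And>a b x. a \<in> {\<nu> - 1..\<nu>} \<Longrightarrow> b \<in> {\<nu> - 1..\<nu>} \<Longrightarrow> x \<in> {l..R} \<Longrightarrow>
      \<bar>Y a x - Y b x\<bar> \<le> L * \<bar>a - b\<bar>"
    using shot_lipschitz by blast
  define \<eta> where "\<eta> = min 1 (- Y \<nu> x / (L + 1))"
  have \<eta>: "\<eta> > 0" "\<eta> \<le> 1" "L * \<eta> < - Y \<nu> x"
    using \<open>\<not> Y \<nu> x \<ge> 0\<close> L0 unfolding \<eta>_def by (auto simp: min_def field_simps)
  obtain \<nu>' where \<nu>': "\<nu>' \<in> {\<nu> - \<eta>..\<nu>}" "positive_shot \<nu>'" using approx[OF \<eta>(1)] by blast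
  have "\<bar>Y \<nu>' x - Y \<nu> x\<bar> \<le> L * \<bar>\<nu>' - \<nu>\<bar>" using L[of \<nu>' \<nu> x] \<nu>'(1) \<eta>(2) x by auto
  also have "\<dots> \<le> L * \<eta>" using \<nu>'(1) L0 by (intro mult_left_mono) auto
  finally have "Y \<nu>' x < 0" using \<eta>(3) by simp
  with \<nu>'(2) x show False unfolding positive_shot_def by force
qed

text \<open>Beyond its first zero \<open>t\<close> the shot \<open>Y \<nu>\<close> stays nonnegative, so if \<open>t < r\<close> then \<open>Z \<nu> t = 0\<close>, and the
  Wronskian of \<open>Y \<nu>\<close> with the positive shot \<open>Y \<nu>1\<close> would vanish at both ends of \<open>[l, t]\<close> while being
  strictly decreasing.\<close>

lemma dirichlet_eigenvalue_at_positivity_threshold: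
  assumes pos1: "positive_shot \<nu>1" and "\<nu>1 < \<nu>" and "\<not> positive_shot \<nu>"
    and nonneg: "\<And>x. l < x \<Longrightarrow> x \<le> r \<Longrightarrow> Y \<nu> x \<ge> 0"
  shows "\<nu> \<in> dirichlet_eigenvalues \<epsilon> V l r"
proof -
  obtain t where t: "l < t" "t \<le> r" "Y \<nu> t = 0" "\<And>x. l < x \<Longrightarrow> x < t \<Longrightarrow> Y \<nu> x > 0"
    using first_zero_of_shot[OF \<open>\<not> positive_shot \<nu>\<close>] by blast
  have "t = r"
  proof (rule ccontr)
    assume "t \<noteq> r"
    with t have tr: "t < r" by simp
    have "Z \<nu> t = 0"
    proof (rule DERIV_local_min[OF Y_deriv[of t \<nu>]])
      show "\<forall>y. \<bar>t - y\<bar> < min (t - l) (r - t) \<longrightarrow> Y \<nu> t \<le> Y \<nu> y"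
        using nonneg t(3) by (auto simp: abs_less_iff)
    qed (use t tr in auto)
    define W where "W x = Z \<nu> x * Y \<nu>1 x - Y \<nu> x * Z \<nu>1 x" for x
    have "W l > W t"
    proof (rule DERIV_neg_imp_decreasing_open[OF t(1)])
      fix x assume x: "l < x" "x < t"
      have "(\<nu>1 - \<nu>) / (2 * \<epsilon>\<^sup>2) < 0" using \<open>\<nu>1 < \<nu>\<close> eps by (simp add: divide_neg_pos)
      moreover have "Y \<nu> x * Y \<nu>1 x > 0" using t(4)[OF x] pos1 x t unfolding positive_shot_def by simp
      ultimately have "(\<nu>1 - \<nu>) / (2 * \<epsilon>\<^sup>2) * Y \<nu> x * Y \<nu>1 x < 0"
        by (metis mult.assoc mult_neg_pos)
      then show "\<exists>y. DERIV W x :> y \<and> y < 0" unfolding W_def using wronskian_deriv[of x] x t by force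
    qed (use t in \<open>auto simp: W_def intro!: continuous_intros continuous_on_Y continuous_on_Z\<close>)
    then show False unfolding W_def using shot_ivp(1) t(3) \<open>Z \<nu> t = 0\<close> by simp
  qed
  with t(3) show ?thesis by (intro dirichlet_eigenvalue_if_shot_vanishes) simp
qed

theorem shooting:
  assumes Vge: "\<And>t. l \<le> t \<Longrightarrow> t \<le> r \<Longrightarrow> V t \<ge> \<nu>1" and not_pos_\<mu>: "\<not> positive_shot \<mu>"
  shows "\<exists>\<nu>\<le>\<mu>. \<nu> \<in> dirichlet_eigenvalues \<epsilon> V l r"
proof -
  have pos1: "positive_shot \<nu>1" by (rule positive_shot_if_potential_ge[OF Vge])
  have "\<nu>1 < \<mu>"
  proof (rule ccontr)
    assume "\<not> \<nu>1 < \<mu>"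
    then have "positive_shot \<mu>"
      using pos1 positive_shot_antimono[of \<mu> \<nu>1] by (cases "\<mu> = \<nu>1") auto
    with not_pos_\<mu> show False by contradiction
  qed
  define P where "P = {\<nu> \<in> {\<nu>1..\<mu>}. positive_shot \<nu>}"
  have "\<nu>1 \<in> P" and bdd: "bdd_above P" using pos1 \<open>\<nu>1 < \<mu>\<close> unfolding P_def by auto
  define \<nu> where "\<nu> = Sup P"
  have upper: "\<nu>' \<le> \<nu>" if "\<nu>' \<in> P" for \<nu>' unfolding \<nu>_def using cSup_upper[OF that bdd] .
  have "\<nu> \<le> \<mu>" unfolding \<nu>_def by (rule cSup_least) (use \<open>\<nu>1 \<in> P\<close> in \<open>auto simp: P_def\<close>)
  with upper[OF \<open>\<nu>1 \<in> P\<close>] have \<nu>: "\<nu>1 \<le> \<nu>" "\<nu> \<le> \<mu>" by auto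
  have not_pos: "\<not> positive_shot \<nu>"
  proof
    assume pos: "positive_shot \<nu>"
    with not_pos_\<mu> \<nu>(2) have "\<nu> < \<mu>" by (cases "\<nu> = \<mu>") auto
    with pos obtain \<nu>' where "\<nu> < \<nu>'" "\<nu>' \<le> \<mu>" "positive_shot \<nu>'" by (rule positive_shot_open)
    with \<nu>(1) have "\<nu>' \<in> P" unfolding P_def by simp
    with upper[of \<nu>'] \<open>\<nu> < \<nu>'\<close> show False by simp
  qed
  have "\<exists>\<nu>'\<in>{\<nu> - \<eta>..\<nu>}. positive_shot \<nu>'" if \<eta>: "\<eta> > 0" for \<eta>
  proof -
    obtain \<nu>' where "\<nu>' \<in> P" "\<nu> - \<eta> < \<nu>'"
      using less_cSupE[of "\<nu> - \<eta>" P] \<open>\<nu>1 \<in> P\<close> \<eta> unfolding \<nu>_def by auto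
    with upper[of \<nu>'] show ?thesis unfolding P_def by force
  qed
  then have nonneg: "\<And>x. l < x \<Longrightarrow> x \<le> r \<Longrightarrow> Y \<nu> x \<ge> 0" by (rule shot_nonneg_if_approximated)
  have "\<nu>1 < \<nu>" using pos1 not_pos \<nu>(1) by (cases "\<nu>1 = \<nu>") auto
  with pos1 have "\<nu> \<in> dirichlet_eigenvalues \<epsilon> V l r"
    using not_pos nonneg by (rule dirichlet_eigenvalue_at_positivity_threshold)
  with \<nu> show ?thesis by blast
qed

end

section \<open>Dirichlet eigenvalues lie above a positive solution\<close>

lemma dirichlet_eigenvalue_gt:
  fixes U U' U'' V :: "real \<Rightarrow> real"
  assumes eps: "\<epsilon> > 0" and Upos: "\<And>x. U x > 0"
    and dU: "\<And>x. (U has_real_derivative U' x) (at x)"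
    and dU': "\<And>x. (U' has_real_derivative U'' x) (at x)"
    and eqU: "\<And>x. - 2 * \<epsilon>\<^sup>2 * U'' x + V x * U x = \<Lambda> * U x"
    and \<nu>: "\<nu> \<in> dirichlet_eigenvalues \<epsilon> V l r"
  shows "\<Lambda> < \<nu>"
proof (rule ccontr)
  assume "\<not> \<Lambda> < \<nu>"
  obtain u u' u'' where u: "continuous_on {l..r} u" "u l = 0" "u r = 0" "\<exists>x\<in>{l<..<r}. u x \<noteq> 0"
     "\<And>x. x \<in> {l<..<r} \<Longrightarrow> (u has_real_derivative u' x) (at x) \<and> (u' has_real_derivative u'' x) (at x) \<and>
          - 2 * \<epsilon>\<^sup>2 * u'' x + V x * u x = \<nu> * u x"
    using \<nu> unfolding dirichlet_eigenvalues_def by blast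
  obtain x0 where x0: "l < x0" "x0 < r" "u x0 \<noteq> 0" using u(4) by auto
  define s where "s = sgn (u x0)"
  have s: "s * u x0 > 0" "\<bar>s\<bar> = 1" using x0(3) unfolding s_def by (auto simp: sgn_if)
  define p where "p x = s * u x" for x
  have cp: "continuous_on {l..r} p" unfolding p_def using u(1) by (intro continuous_intros)
  obtain c d where cd: "l \<le> c" "c < x0" "x0 < d" "d \<le> r" "p c = 0" "p d = 0"
    "\<And>x. c < x \<Longrightarrow> x < d \<Longrightarrow> p x > 0"
    using positive_component_around[OF cp, of x0] u(2,3) x0 s unfolding p_def by auto
  show False
  proof (rule sturm_comparison[of c d p U "\<lambda>x. s * u' x" "\<lambda>x. s * u'' x" U' U''])
    show "continuous_on {c..d} U" using dU by (intro has_real_derivative_imp_continuous_on) blast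
    fix x assume x: "c < x" "x < d"
    then have ux: "(u has_real_derivative u' x) (at x)" "(u' has_real_derivative u'' x) (at x)"
        "2 * \<epsilon>\<^sup>2 * u'' x = (V x - \<nu>) * u x"
      using u(5)[of x] cd by (auto simp: algebra_simps)
    show "(p has_real_derivative s * u' x) (at x)" "((\<lambda>x. s * u' x) has_real_derivative s * u'' x) (at x)"
      unfolding p_def using ux by (auto intro!: DERIV_cmult)
    have U'': "2 * \<epsilon>\<^sup>2 * U'' x = (V x - \<Lambda>) * U x" using eqU[of x] by (simp add: algebra_simps)
    have "2 * \<epsilon>\<^sup>2 * (s * u'' x * U x - p x * U'' x) =
          s * U x * (2 * \<epsilon>\<^sup>2 * u'' x) - s * u x * (2 * \<epsilon>\<^sup>2 * U'' x)"
      unfolding p_def by (simp add: algebra_simps)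
    also have "\<dots> = s * U x * ((V x - \<nu>) * u x) - s * u x * ((V x - \<Lambda>) * U x)"
      by (simp only: ux(3) U'')
    also have "\<dots> = (\<Lambda> - \<nu>) * (p x * U x)" unfolding p_def by (simp add: algebra_simps)
    finally have "2 * \<epsilon>\<^sup>2 * (s * u'' x * U x - p x * U'' x) = (\<Lambda> - \<nu>) * (p x * U x)" .
    moreover have "(\<Lambda> - \<nu>) * (p x * U x) \<ge> 0" using \<open>\<not> \<Lambda> < \<nu>\<close> cd(7)[OF x] Upos[of x] by simp
    ultimately have "2 * \<epsilon>\<^sup>2 * (s * u'' x * U x - p x * U'' x) \<ge> 0" by simp
    then show "0 \<le> s * u'' x * U x - p x * U'' x" using eps by (simp add: zero_le_mult_iff)
  qed (use cd cp Upos dU dU' in \<open>auto intro: continuous_on_subset\<close>)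
qed

lemma first_dirichlet_eigenvalue_bounds:
  fixes U U' U'' V :: "real \<Rightarrow> real"
  assumes "\<epsilon> > 0" and "\<And>x. U x > 0"
    and "\<And>x. (U has_real_derivative U' x) (at x)"
    and "\<And>x. (U' has_real_derivative U'' x) (at x)"
    and "\<And>x. - 2 * \<epsilon>\<^sup>2 * U'' x + V x * U x = \<Lambda> * U x"
    and \<nu>: "\<nu> \<in> dirichlet_eigenvalues \<epsilon> V l r"
  shows "\<Lambda> \<le> first_dirichlet_eigenvalue \<epsilon> V l r" "first_dirichlet_eigenvalue \<epsilon> V l r \<le> \<nu>"
proof -
  have gt: "\<And>\<mu>. \<mu> \<in> dirichlet_eigenvalues \<epsilon> V l r \<Longrightarrow> \<Lambda> < \<mu>"
    using dirichlet_eigenvalue_gt[OF assms(1-5)] by blast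
  show "\<Lambda> \<le> first_dirichlet_eigenvalue \<epsilon> V l r" unfolding first_dirichlet_eigenvalue_def
    using \<nu> gt by (intro cInf_greatest) (auto intro: less_imp_le)
  show "first_dirichlet_eigenvalue \<epsilon> V l r \<le> \<nu>" unfolding first_dirichlet_eigenvalue_def
    using \<nu> gt by (intro cInf_lower bdd_belowI[of _ \<Lambda>]) (auto intro: less_imp_le)
qed

section \<open>The symmetric double well\<close>

lemma periodic1_shift_int:
  assumes "periodic1 f"
  shows "f (x + of_int k) = f x"
proof -
  have shift_nat: "f (y + real n) = f y" for y n
  proof (induction n)
    case (Suc n)
    have "f (y + real (Suc n)) = f ((y + real n) + 1)" by (simp add: ac_simps)
    with Suc assms show ?case unfolding periodic1_def by simp
  qed simp
  show ?thesis
  proof (cases "k \<ge> 0")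
    case True
    then show ?thesis using shift_nat[of x "nat k"] by simp
  next
    case False
    then have "x = (x + of_int k) + real (nat (- k))" by simp
    then show ?thesis using shift_nat[of "x + of_int k" "nat (- k)"] by simp
  qed
qed

lemma periodic1_attains_max:
  fixes f :: "real \<Rightarrow> real"
  assumes "periodic1 f" "continuous_on UNIV f"
  obtains xm where "xm \<in> {-1/4..3/4}" "\<And>y. f y \<le> f xm"
proof -
  obtain xm where xm: "xm \<in> {-1/4..3/4::real}" "\<And>y. y \<in> {-1/4..3/4} \<Longrightarrow> f y \<le> f xm"
    using continuous_attains_sup[OF compact_Icc _ continuous_on_subset[OF assms(2)], of "-1/4" "3/4"]
    by auto
  have "f y \<le> f xm" for y
  proof -
    define k where "k = \<lfloor>y + 1/4\<rfloor>"
    have "of_int k \<le> y + 1/4" "y + 1/4 < of_int k + 1"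
      unfolding k_def by (rule of_int_floor_le, rule real_of_int_floor_add_one_gt)
    then have "y - of_int k \<in> {-1/4..3/4}" by simp
    with xm(2) periodic1_shift_int[OF assms(1), of "y - of_int k" k] show ?thesis by simp
  qed
  with xm(1) show ?thesis by (rule that)
qed

locale double_well =
  fixes \<rho> A :: real and V :: "real \<Rightarrow> real"
  assumes rho: "0 < \<rho>" "\<rho> < 1/20"
    and A: "2 * \<bar>A\<bar> * \<rho>\<^sup>2 \<le> 1/4"
    and V_periodic: "periodic1 V" and V_cont: "continuous_on UNIV V"
    and V_0: "\<And>x. \<bar>x\<bar> < \<rho> \<Longrightarrow> V x = x\<^sup>2 / 2 + A * x ^ 4 * omega \<bar>x\<bar>"
    and V_half: "\<And>x. \<bar>x - 1/2\<bar> < \<rho> \<Longrightarrow> V x = (x - 1/2)\<^sup>2 / 2 - A * (x - 1/2) ^ 4 * omega \<bar>x - 1/2\<bar>"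
    and V_pos: "\<And>x. x \<notin> \<int> \<Longrightarrow> x - 1/2 \<notin> \<int> \<Longrightarrow> V x > 0"
begin

abbreviation E_well :: "real \<Rightarrow> real \<Rightarrow> real" where
  "E_well \<epsilon> b \<equiv> first_dirichlet_eigenvalue \<epsilon> V (b - \<rho>) (b + \<rho>)"

lemma quartic_term_bound:
  assumes "\<bar>y\<bar> < \<rho>"
  shows "\<bar>A * y ^ 4 * omega \<bar>y\<bar>\<bar> \<le> y\<^sup>2 / 8"
proof -
  have "\<bar>A\<bar> * y\<^sup>2 \<le> \<bar>A\<bar> * \<rho>\<^sup>2"
    using assms by (intro mult_left_mono) (auto simp: abs_le_square_iff[symmetric])
  also have "\<dots> \<le> 1/8" using A by simp
  finally have "\<bar>A\<bar> * y\<^sup>2 * y\<^sup>2 \<le> 1/8 * y\<^sup>2" by (intro mult_right_mono) auto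
  moreover have "\<bar>A * y ^ 4 * omega \<bar>y\<bar>\<bar> = \<bar>A\<bar> * y\<^sup>2 * y\<^sup>2 * \<bar>omega \<bar>y\<bar>\<bar>"
    by (simp add: abs_mult power2_eq_square power4_eq_xxxx)
  moreover have "\<dots> \<le> \<bar>A\<bar> * y\<^sup>2 * y\<^sup>2" unfolding omega_def by (intro mult_left_le) auto
  ultimately show ?thesis by simp
qed

lemma V_near_well:
  assumes b: "b \<in> {0, 1/2}" and y: "\<bar>y\<bar> < \<rho>"
  shows "3 * y\<^sup>2 / 8 \<le> V (b + y)" "V (b + y) \<le> 5 * y\<^sup>2 / 8"
proof -
  have "V (b + y) = y\<^sup>2 / 2 + A * y ^ 4 * omega \<bar>y\<bar> \<or> V (b + y) = y\<^sup>2 / 2 - A * y ^ 4 * omega \<bar>y\<bar>"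
  proof (cases "b = 0")
    case False
    then have "b = 1/2" using b by simp
    then have "V (b + y) = V (1/2 + y)" by (simp only:)
    with V_half[of "1/2 + y"] y show ?thesis by simp
  qed (use V_0[OF y] in simp)
  with quartic_term_bound[OF y] show "3 * y\<^sup>2 / 8 \<le> V (b + y)" "V (b + y) \<le> 5 * y\<^sup>2 / 8"
    by (auto simp: abs_le_iff)
qed

lemma V_nonneg: "V x \<ge> 0"
proof (cases "x \<in> \<int> \<or> x - 1/2 \<in> \<int>")
  case True
  then obtain k :: int and b where b: "b \<in> {0, 1/2}" "x = b + of_int k"
    by (metis Ints_cases add.commute add_0 diff_add_cancel insertCI)
  then have "V x = V (b + 0)" using periodic1_shift_int[OF V_periodic, of b k] by simp
  also have "\<dots> \<ge> 0" using V_near_well(1)[OF b(1), of 0] rho by simp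
  finally show ?thesis .
qed (use V_pos in force)

definition away_from_wells :: "real set" where
  "away_from_wells = {-1/4..-\<rho>/2} \<union> {\<rho>/2..1/2-\<rho>/2} \<union> {1/2+\<rho>/2..3/4}"

definition gap :: real where
  "gap = Inf (V ` away_from_wells)"

lemma V_pos_away: "x \<in> away_from_wells \<Longrightarrow> V x > 0"
proof -
  have int_small: "z = 0" if "z \<in> \<int>" "-1 < z" "z < 1" for z :: real
  proof -
    obtain k where k: "z = of_int k" using \<open>z \<in> \<int>\<close> by (rule Ints_cases)
    with that have "k = 0" by simp
    with k show ?thesis by simp
  qed
  assume "x \<in> away_from_wells"
  then have x: "x \<noteq> 0" "-1 < x" "x < 1" and x': "x - 1/2 \<noteq> 0" "-1 < x - 1/2" "x - 1/2 < 1"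
    using rho unfolding away_from_wells_def by auto
  have "x \<notin> \<int>" using int_small[of x] x by blast
  moreover have "x - 1/2 \<notin> \<int>" using int_small[of "x - 1/2"] x' by blast
  ultimately show ?thesis by (rule V_pos)
qed

lemma gap: "gap > 0" "\<And>x. x \<in> away_from_wells \<Longrightarrow> V x \<ge> gap"
proof -
  have ne: "away_from_wells \<noteq> {}" unfolding away_from_wells_def using rho by auto
  have "compact away_from_wells" unfolding away_from_wells_def by (intro compact_Un compact_Icc)
  then obtain xm where xm: "xm \<in> away_from_wells" "\<And>y. y \<in> away_from_wells \<Longrightarrow> V xm \<le> V y"
    using continuous_attains_inf[OF _ ne continuous_on_subset[OF V_cont subset_UNIV]] by auto
  then have "gap = V xm" unfolding gap_def
    by (intro antisym cInf_lower cInf_greatest) (auto intro!: bdd_belowI[of _ "V xm"])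
  with xm V_pos_away[OF xm(1)] show "gap > 0" "\<And>x. x \<in> away_from_wells \<Longrightarrow> V x \<ge> gap" by auto
qed

lemma away_from_wells_if:
  "b \<in> {0, 1/2} \<Longrightarrow> \<rho>/2 \<le> \<bar>x - b\<bar> \<Longrightarrow> \<bar>x - b\<bar> \<le> 3 * \<rho> / 2 \<Longrightarrow> x \<in> away_from_wells"
  using rho unfolding away_from_wells_def by (auto simp: abs_if split: if_splits)

lemma near_well_if_not_away:
  "x \<in> {-1/4..3/4} \<Longrightarrow> x \<notin> away_from_wells \<Longrightarrow> \<bar>x\<bar> < \<rho>/2 \<or> \<bar>x - 1/2\<bar> < \<rho>/2"
  using rho unfolding away_from_wells_def by (auto simp: abs_if split: if_splits)

definition decay_rate :: real where
  "decay_rate = \<rho> * sqrt gap / 4"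

lemma decay_rate_pos: "decay_rate > 0"
  unfolding decay_rate_def using rho gap(1) by simp

definition harnack_const :: real where
  "harnack_const = exp (- 60)"

lemma harnack_const_pos: "harnack_const > 0"
  unfolding harnack_const_def by simp

definition eta :: "real \<Rightarrow> real" where
  "eta \<epsilon> = exp (- (decay_rate / (2 * \<epsilon>)))"

lemma eta_pos: "eta \<epsilon> > 0"
  unfolding eta_def by simp

lemma exp_decay_rate_eq_eta_sq: "exp (- (decay_rate / \<epsilon>)) = (eta \<epsilon>)\<^sup>2"
  unfolding eta_def by (simp add: power2_eq_square exp_add[symmetric])

end

section \<open>Estimates for a positive eigenfunction\<close>

locale positive_state = double_well +
  fixes \<epsilon> \<Lambda> :: real and U U' U'' :: "real \<Rightarrow> real"
  assumes eps: "\<epsilon> > 0" and U_pos: "\<And>x. U x > 0" and U_periodic: "periodic1 U"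
    and dU: "\<And>x. (U has_real_derivative U' x) (at x)"
    and dU': "\<And>x. (U' has_real_derivative U'' x) (at x)"
    and U_eq: "\<And>x. - 2 * \<epsilon>\<^sup>2 * U'' x + V x * U x = \<Lambda> * U x"
    and eps_small: "12 * sqrt \<epsilon> < \<rho>" "12 * \<epsilon> \<le> gap"
begin

abbreviation "s \<equiv> sqrt \<epsilon>"

lemma s_pos: "s > 0" and s_sq: "s\<^sup>2 = \<epsilon>"
  using eps by auto

lemma U''_eq: "2 * \<epsilon>\<^sup>2 * U'' x = (V x - \<Lambda>) * U x"
  using U_eq[of x] by (simp add: algebra_simps)

lemma continuous_on_U: "continuous_on S U"
  using dU by (intro has_real_derivative_imp_continuous_on) blast

definition x_max :: real where
  "x_max = (SOME xm. xm \<in> {-1/4..3/4} \<and> (\<forall>y. U y \<le> U xm))"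

lemma x_max: "x_max \<in> {-1/4..3/4}" "\<And>y. U y \<le> U x_max"
proof -
  obtain xm where "xm \<in> {-1/4..3/4}" "\<And>y. U y \<le> U xm"
    using periodic1_attains_max[OF U_periodic continuous_on_U] by blast
  then have "x_max \<in> {-1/4..3/4} \<and> (\<forall>y. U y \<le> U x_max)" unfolding x_max_def by (intro someI) auto
  then show "x_max \<in> {-1/4..3/4}" "\<And>y. U y \<le> U x_max" by auto
qed

abbreviation "M \<equiv> U x_max"

lemma V_at_max_le: "V x_max \<le> \<Lambda>"
proof -
  have "U'' x_max \<le> 0"
    by (rule second_derivative_nonpos_at_local_max[where d = 1, OF _ _ dU dU']) (use x_max in auto)
  then have "2 * \<epsilon>\<^sup>2 * U'' x_max \<le> 0" by (simp add: mult_nonneg_nonpos)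
  then have "(V x_max - \<Lambda>) * U x_max \<le> 0" unfolding U''_eq .
  then show ?thesis using U_pos[of x_max] by (simp add: mult_le_0_iff)
qed

lemma eigenvalue_nonneg: "\<Lambda> \<ge> 0"
  using V_at_max_le V_nonneg[of x_max] by simp

text \<open>The bump \<open>cos (\<pi> (x - b) / (4 s))\<close> is the ground state of \<open>- d\<^sup>2/dx\<^sup>2\<close> on \<open>(b - 2 s, b + 2 s)\<close>, a
  window on which \<open>V \<le> 5 \<epsilon> / 2\<close>; it serves as a test function pinning both \<open>\<Lambda>\<close> and the well
  eigenvalues below \<open>6 \<epsilon>\<close>.\<close>

definition "bump b x = cos (pi * (x - b) / (4 * s))"
definition "bump' b x = - sin (pi * (x - b) / (4 * s)) * (pi / (4 * s))"
definition "bump'' b x = - cos (pi * (x - b) / (4 * s)) * (pi / (4 * s)) * (pi / (4 * s))"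

lemma bump_deriv: "(bump b has_real_derivative bump' b x) (at x)"
  and bump'_deriv: "(bump' b has_real_derivative bump'' b x) (at x)"
  unfolding bump_def bump'_def bump''_def using eps by (auto intro!: derivative_eq_intros simp: field_simps)

lemma bump_ends: "bump b (b - 2 * s) = 0" "bump b (b + 2 * s) = 0"
proof -
  have "pi * (b - 2 * s - b) / (4 * s) = - (pi / 2)" and "pi * (b + 2 * s - b) / (4 * s) = pi / 2"
    using s_pos by (simp_all add: field_simps)
  then show "bump b (b - 2 * s) = 0" "bump b (b + 2 * s) = 0" unfolding bump_def by (simp_all only: cos_minus cos_pi_half)
qed

lemma bump_pos:
  assumes "b - 2 * s < x" "x < b + 2 * s"
  shows "bump b x > 0"
proof -
  have "-(1/2) < (x - b) / (4 * s)" "(x - b) / (4 * s) < 1/2" using assms s_pos by (simp_all add: field_simps)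
  then have "pi * (-(1/2)) < pi * ((x - b) / (4 * s))" "pi * ((x - b) / (4 * s)) < pi * (1/2)"
    using pi_gt_zero by (intro mult_strict_left_mono; simp)+
  then have "- (pi / 2) < pi * (x - b) / (4 * s)" "pi * (x - b) / (4 * s) < pi / 2" by simp_all
  then show ?thesis unfolding bump_def by (rule cos_gt_zero_pi)
qed

lemma bump''_eq: "2 * \<epsilon>\<^sup>2 * bump'' b x = - (pi\<^sup>2 * \<epsilon> / 8) * bump b x"
  unfolding bump''_def bump_def using s_pos s_sq by (simp add: power2_eq_square field_simps)

lemma pi_sq_le: "pi\<^sup>2 * \<epsilon> / 8 \<le> 2 * \<epsilon>"
proof -
  have "pi\<^sup>2 \<le> 4\<^sup>2" using pi_less_4 pi_gt_zero by (intro power_mono) auto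
  then show ?thesis using eps by (simp add: field_simps)
qed

lemma V_le_on_bump:
  assumes b: "b \<in> {0, 1/2}" and x: "b - 2 * s < x" "x < b + 2 * s"
  shows "V x \<le> 5 * \<epsilon> / 2"
proof -
  have ax: "\<bar>x - b\<bar> < 2 * s" using x by auto
  then have "\<bar>x - b\<bar> < \<rho>" using eps_small s_pos by linarith
  then have "V (b + (x - b)) \<le> 5 * (x - b)\<^sup>2 / 8" by (rule V_near_well(2)[OF b])
  moreover have "(x - b)\<^sup>2 \<le> (2 * s)\<^sup>2"
  proof -
    have "\<bar>x - b\<bar> \<le> \<bar>2 * s\<bar>" using ax s_pos by simp
    then show ?thesis by (simp only: abs_le_square_iff)
  qed
  moreover have "(2 * s)\<^sup>2 = 4 * \<epsilon>" using s_sq by (simp add: power_mult_distrib)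
  ultimately show ?thesis by simp
qed

lemma bump_subsolution:
  assumes b: "b \<in> {0, 1/2}" and x: "b - 2 * s < x" "x < b + 2 * s" and \<mu>: "\<mu> \<ge> 6 * \<epsilon>"
  shows "2 * \<epsilon>\<^sup>2 * bump'' b x \<ge> (V x - \<mu>) * bump b x"
proof -
  have "V x - \<mu> \<le> - (pi\<^sup>2 * \<epsilon> / 8)" using V_le_on_bump[OF b x] pi_sq_le \<mu> eps by linarith
  then show ?thesis unfolding bump''_eq using bump_pos[OF x] by (intro mult_right_mono) auto
qed

lemma eigenvalue_lt: "\<Lambda> < 6 * \<epsilon>"
proof (rule ccontr)
  assume "\<not> \<Lambda> < 6 * \<epsilon>"
  show False
  proof (rule sturm_comparison[of "0 - 2 * s" "0 + 2 * s" "bump 0" U "bump' 0" "bump'' 0" U' U''])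
    fix x assume x: "0 - 2 * s < x" "x < 0 + 2 * s"
    have "2 * \<epsilon>\<^sup>2 * (bump'' 0 x * U x - bump 0 x * U'' x) =
          2 * \<epsilon>\<^sup>2 * bump'' 0 x * U x - bump 0 x * (2 * \<epsilon>\<^sup>2 * U'' x)"
      by (simp add: algebra_simps)
    also have "\<dots> = (2 * \<epsilon>\<^sup>2 * bump'' 0 x - (V x - \<Lambda>) * bump 0 x) * U x"
      unfolding U''_eq by (simp add: algebra_simps)
    finally have "2 * \<epsilon>\<^sup>2 * (bump'' 0 x * U x - bump 0 x * U'' x) =
                  (2 * \<epsilon>\<^sup>2 * bump'' 0 x - (V x - \<Lambda>) * bump 0 x) * U x" .
    moreover have "2 * \<epsilon>\<^sup>2 * bump'' 0 x - (V x - \<Lambda>) * bump 0 x \<ge> 0"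
      using bump_subsolution[of 0 x \<Lambda>] x \<open>\<not> \<Lambda> < 6 * \<epsilon>\<close> by simp
    ultimately have "2 * \<epsilon>\<^sup>2 * (bump'' 0 x * U x - bump 0 x * U'' x) \<ge> 0" using U_pos[of x] by simp
    then show "0 \<le> bump'' 0 x * U x - bump 0 x * U'' x" using eps by (simp add: zero_le_mult_iff)
  next
    show "continuous_on {0 - 2 * s..0 + 2 * s} (bump 0)"
      using bump_deriv by (intro has_real_derivative_imp_continuous_on) blast
    show "bump 0 (0 - 2 * s) = 0" "bump 0 (0 + 2 * s) = 0" using bump_ends[of 0] by simp_all
  qed (use s_pos bump_pos U_pos bump_deriv bump'_deriv dU dU' continuous_on_U in auto)
qed

lemma E_well_ge:
  assumes b: "b \<in> {0, 1/2}"
  shows "\<Lambda> \<le> E_well \<epsilon> b"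
proof -
  interpret sh: shooting \<epsilon> V "b - \<rho>" "b + \<rho>" using eps V_cont rho by unfold_locales auto
  have "\<not> sh.positive_shot (6 * \<epsilon>)"
  proof (rule sh.not_positive_shot_if_subsolution[of "b - 2 * s" "b + 2 * s" "bump b" "bump' b" "bump'' b"])
    show "continuous_on {b - 2 * s..b + 2 * s} (bump b)"
      using bump_deriv by (intro has_real_derivative_imp_continuous_on) blast
    show "b - \<rho> < b - 2 * s" "b - 2 * s < b + 2 * s" "b + 2 * s \<le> b + \<rho>" using eps_small s_pos by linarith+
    show "shooting_coeff \<epsilon> V (6 * \<epsilon>) x * bump b x \<le> bump'' b x" if "b - 2 * s < x" "x < b + 2 * s" for x
      using bump_subsolution[OF b that] eps by (simp add: shooting_coeff_mult_le_iff)
  qed (use bump_ends bump_pos bump_deriv bump'_deriv in auto)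
  then obtain \<nu> where "\<nu> \<in> dirichlet_eigenvalues \<epsilon> V (b - \<rho>) (b + \<rho>)"
    using sh.shooting[of 0] V_nonneg by blast
  then show ?thesis by (rule first_dirichlet_eigenvalue_bounds(1)[OF eps U_pos dU dU' U_eq])
qed

lemma near_well_if_V_small:
  assumes b: "b \<in> {0, 1/2}" and x: "\<bar>x - b\<bar> < \<rho>" and c: "c \<ge> 0" and V: "V x \<le> 3 * c\<^sup>2 * \<epsilon> / 8"
  shows "\<bar>x - b\<bar> \<le> c * s"
proof -
  have "3 * (x - b)\<^sup>2 / 8 \<le> V x" using V_near_well(1)[OF b x] by simp
  with V have "(x - b)\<^sup>2 \<le> (c * s)\<^sup>2" using s_sq by (simp add: power_mult_distrib)
  with c s_pos show ?thesis by (simp add: abs_le_square_iff[symmetric])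
qed

lemma near_well_if_below_gap:
  assumes "b \<in> {0, 1/2}" "\<bar>x - b\<bar> < \<rho>" "V x < gap"
  shows "\<bar>x - b\<bar> < \<rho> / 2"
  using away_from_wells_if[OF assms(1), of x] gap(2)[of x] assms(2,3) by force

lemma max_near_well: "\<exists>b\<in>{0, 1/2}. \<bar>x_max - b\<bar> \<le> 4 * s"
proof -
  have "V x_max < gap" using V_at_max_le eigenvalue_lt eps_small(2) eps by linarith
  then have "x_max \<notin> away_from_wells" using gap(2) by force
  then have "\<bar>x_max - 0\<bar> < \<rho> / 2 \<or> \<bar>x_max - 1/2\<bar> < \<rho> / 2"
    using near_well_if_not_away x_max(1) by simp
  moreover have "V x_max \<le> 3 * 4\<^sup>2 * \<epsilon> / 8" using V_at_max_le eigenvalue_lt by simp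
  ultimately show ?thesis
    using near_well_if_V_small[of 0 x_max 4] near_well_if_V_small[of "1/2" x_max 4] rho by auto
qed

text \<open>On \<open>\<rho>/2 \<le> |x - b| \<le> 3\<rho>/2\<close> we have \<open>V - \<Lambda> \<ge> gap/2\<close>, so \<open>U\<close> is convex enough to decay
  like \<open>cosh (k (x - b \<mp> \<rho>))\<close> with \<open>k = sqrt gap / (2 \<epsilon>)\<close>.\<close>

lemma U_at_well_edges:
  assumes b: "b \<in> {0, 1/2}"
  shows "U (b - \<rho>) \<le> 2 * M * exp (- (decay_rate / \<epsilon>))" "U (b + \<rho>) \<le> 2 * M * exp (- (decay_rate / \<epsilon>))"
proof -
  define k where "k = sqrt gap / (2 * \<epsilon>)"
  have k: "k > 0" unfolding k_def using gap(1) eps by simp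
  have k_sq: "k\<^sup>2 = gap / (4 * \<epsilon>\<^sup>2)" unfolding k_def using gap(1) by (simp add: power_divide power_mult_distrib)
  have convex: "U'' x \<ge> k\<^sup>2 * U x" if "\<rho>/2 \<le> \<bar>x - b\<bar>" "\<bar>x - b\<bar> \<le> 3 * \<rho> / 2" for x
  proof -
    have "V x - \<Lambda> \<ge> gap / 2" using gap(2)[OF away_from_wells_if[OF b that]] eigenvalue_lt eps_small(2) by linarith
    then have "(gap / 2) * U x \<le> 2 * \<epsilon>\<^sup>2 * U'' x" unfolding U''_eq using U_pos[of x] by (intro mult_right_mono) auto
    then show ?thesis unfolding k_sq using eps by (simp add: field_simps)
  qed
  have rate: "k * (\<rho> / 2) = decay_rate / \<epsilon>" unfolding k_def decay_rate_def using eps by (simp add: field_simps)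
  have mid: "((b - 3 * \<rho> / 2) + (b - \<rho> / 2)) / 2 = b - \<rho>" "((b - \<rho> / 2) - (b - 3 * \<rho> / 2)) / 2 = \<rho> / 2"
    "((b + \<rho> / 2) + (b + 3 * \<rho> / 2)) / 2 = b + \<rho>" "((b + 3 * \<rho> / 2) - (b + \<rho> / 2)) / 2 = \<rho> / 2"
    by (simp_all add: field_simps)
  have "U (((b - 3 * \<rho> / 2) + (b - \<rho> / 2)) / 2) \<le>
      2 * M * exp (- (k * (((b - \<rho> / 2) - (b - 3 * \<rho> / 2)) / 2)))"
    by (rule exponential_decay_from_convexity[OF _ k _ dU dU'])
       (use rho x_max less_imp_le[OF U_pos[of x_max]] in \<open>auto intro!: convex simp: abs_if\<close>)
  then show "U (b - \<rho>) \<le> 2 * M * exp (- (decay_rate / \<epsilon>))" unfolding mid rate .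
  have "U (((b + \<rho> / 2) + (b + 3 * \<rho> / 2)) / 2) \<le>
      2 * M * exp (- (k * (((b + 3 * \<rho> / 2) - (b + \<rho> / 2)) / 2)))"
    by (rule exponential_decay_from_convexity[OF _ k _ dU dU'])
       (use rho x_max less_imp_le[OF U_pos[of x_max]] in \<open>auto intro!: convex simp: abs_if\<close>)
  then show "U (b + \<rho>) \<le> 2 * M * exp (- (decay_rate / \<epsilon>))" unfolding mid rate .
qed

text \<open>Within \<open>6 \<surd>\<epsilon>\<close> of a well \<open>U'' \<le> (12/\<epsilon>) U\<close>, so the Harnack inequality with \<open>w = 3/\<surd>\<epsilon>\<close> applies
  across the distance \<open>10 \<surd>\<epsilon>\<close>.\<close>

lemma harnack_near_well:
  assumes b: "b \<in> {0, 1/2}" and x: "\<bar>x - b\<bar> \<le> 5 * s" and y: "\<bar>y - b\<bar> \<le> 5 * s"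
  shows "U x \<ge> harnack_const * U y"
proof -
  define w where "w = 3 / s"
  have w: "w > 0" "1 / w = s / 3" unfolding w_def using s_pos by auto
  have K: "12 / \<epsilon> \<le> 2 * w\<^sup>2" unfolding w_def using s_sq s_pos eps by (simp add: power_divide field_simps)
  have "U x \<ge> exp (- (2 * w * \<bar>x - y\<bar>)) * U y"
  proof (rule harnack_inequality[OF w(1) K _ dU dU', of "b - 5 * s" "b + 5 * s"])
    fix z assume "b - 5 * s - 1 / w \<le> z" "z \<le> b + 5 * s + 1 / w"
    then have zb: "\<bar>z - b\<bar> \<le> 6 * s" using s_pos unfolding w(2) by (auto simp: abs_le_iff)
    then have "\<bar>z - b\<bar> < \<rho>" using eps_small s_pos by linarith
    then have "V z \<le> 5 * (z - b)\<^sup>2 / 8" using V_near_well(2)[OF b, of "z - b"] by simp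
    moreover have "(z - b)\<^sup>2 \<le> (6 * s)\<^sup>2"
    proof -
      have "\<bar>z - b\<bar> \<le> \<bar>6 * s\<bar>" using zb s_pos by simp
      then show ?thesis by (simp only: abs_le_square_iff)
    qed
    ultimately have "V z - \<Lambda> \<le> 24 * \<epsilon>" using eigenvalue_nonneg s_sq by (simp add: power_mult_distrib)
    then have "2 * \<epsilon>\<^sup>2 * U'' z \<le> (24 * \<epsilon>) * U z"
      unfolding U''_eq using U_pos[of z] by (intro mult_right_mono) auto
    also have "\<dots> = 2 * \<epsilon>\<^sup>2 * (12 / \<epsilon> * U z)" using eps by (simp add: power2_eq_square field_simps)
    finally show "U'' z \<le> 12 / \<epsilon> * U z"
      using eps by (metis mult_le_cancel_left_pos zero_less_power zero_less_numeral mult_pos_pos)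
  qed (use x y U_pos in \<open>auto simp: abs_le_iff\<close>)
  moreover have "2 * w * \<bar>x - y\<bar> \<le> 60"
  proof -
    have "2 * w * \<bar>x - y\<bar> \<le> 2 * w * (10 * s)" using x y w by (intro mult_left_mono) (auto simp: abs_le_iff)
    also have "\<dots> = 60" unfolding w_def using s_pos by simp
    finally show ?thesis .
  qed
  then have "harnack_const * U y \<le> exp (- (2 * w * \<bar>x - y\<bar>)) * U y"
    unfolding harnack_const_def using U_pos[of y] by (intro mult_right_mono) auto
  ultimately show ?thesis by simp
qed

lemma shifted_U_subsolution:
  assumes b: "b \<in> {0, 1/2}" and x: "\<bar>x - b\<bar> < \<rho>"
    and C0: "C0 > 0" "C0 * \<epsilon> \<le> 2"
    and Ub: "U b \<ge> eta \<epsilon> * M" and small: "56 * eta \<epsilon> \<le> C0 * harnack_const * \<epsilon>"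
    and H: "0 \<le> H" "H \<le> 4 * M * (eta \<epsilon>)\<^sup>2"
  shows "(V x - (\<Lambda> + C0 * \<epsilon>\<^sup>2 / 2)) * (U x - H) \<le> (V x - \<Lambda>) * U x"
proof -
  define \<mu> where "\<mu> = \<Lambda> + C0 * \<epsilon>\<^sup>2 / 2"
  have "C0 * \<epsilon>\<^sup>2 / 2 \<le> \<epsilon>" using C0 eps mult_right_mono[OF C0(2), of \<epsilon>] by (simp add: power2_eq_square)
  then have \<mu>7: "\<mu> \<le> 7 * \<epsilon>" unfolding \<mu>_def using eigenvalue_lt by simp
  have "(\<mu> - V x) * H \<le> (\<mu> - \<Lambda>) * U x"
  proof (cases "V x \<ge> \<mu>")
    case True
    then have "(\<mu> - V x) * H \<le> 0" using H by (simp add: mult_nonpos_nonneg)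
    moreover have "(\<mu> - \<Lambda>) * U x \<ge> 0" using C0 U_pos[of x] by (simp add: \<mu>_def)
    ultimately show ?thesis by linarith
  next
    case False
    then have "V x < gap" using \<mu>7 eps_small(2) eps by linarith
    then have "\<bar>x - b\<bar> < \<rho> / 2" by (rule near_well_if_below_gap[OF b x])
    moreover have "V x \<le> 3 * 5\<^sup>2 * \<epsilon> / 8" using False \<mu>7 eps by simp
    ultimately have "\<bar>x - b\<bar> \<le> 5 * s" using near_well_if_V_small[OF b x] by simp
    then have Ux: "U x \<ge> harnack_const * (eta \<epsilon> * M)"
      using harnack_near_well[OF b, of x b] mult_left_mono[OF Ub less_imp_le[OF harnack_const_pos]] s_pos
      by simp
    have "(\<mu> - V x) * H \<le> (7 * \<epsilon>) * (4 * M * (eta \<epsilon>)\<^sup>2)"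
      using \<mu>7 V_nonneg[of x] H eps by (intro mult_mono) auto
    also have "\<dots> = (56 * eta \<epsilon>) * (\<epsilon> * M * eta \<epsilon>) / 2" by (simp add: power2_eq_square)
    also have "\<dots> \<le> (C0 * harnack_const * \<epsilon>) * (\<epsilon> * M * eta \<epsilon>) / 2"
      using small eps U_pos[of x_max] eta_pos[of \<epsilon>] by (intro divide_right_mono mult_right_mono) auto
    also have "\<dots> = (C0 * \<epsilon>\<^sup>2 / 2) * (harnack_const * (eta \<epsilon> * M))" by (simp add: power2_eq_square)
    also have "\<dots> \<le> (C0 * \<epsilon>\<^sup>2 / 2) * U x" using Ux C0 by (intro mult_left_mono) auto
    also have "\<dots> = (\<mu> - \<Lambda>) * U x" by (simp add: \<mu>_def)
    finally show ?thesis .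
  qed
  then have "(V x - \<mu>) * (U x - H) \<le> (V x - \<Lambda>) * U x" by (simp add: algebra_simps)
  then show ?thesis by (simp add: \<mu>_def)
qed

lemma E_well_le:
  assumes b: "b \<in> {0, 1/2}" and C0: "C0 > 0" "C0 * \<epsilon> \<le> 2"
    and Ub: "U b \<ge> eta \<epsilon> * M" and small: "56 * eta \<epsilon> \<le> C0 * harnack_const * \<epsilon>" "4 * eta \<epsilon> < 1"
  shows "E_well \<epsilon> b \<le> \<Lambda> + C0 * \<epsilon>\<^sup>2 / 2"
proof -
  define H where "H = 2 * max (U (b - \<rho>)) (U (b + \<rho>))"
  have H_le: "H \<le> 4 * M * (eta \<epsilon>)\<^sup>2"
    using U_at_well_edges[OF b] unfolding H_def exp_decay_rate_eq_eta_sq by simp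
  have H_gt: "U (b - \<rho>) < H" "U (b + \<rho>) < H" unfolding H_def using U_pos[of "b - \<rho>"] U_pos[of "b + \<rho>"] by (auto simp: max_def)
  have "H < U b"
  proof -
    have "H \<le> (4 * eta \<epsilon>) * (eta \<epsilon> * M)" using H_le by (simp add: power2_eq_square mult_ac)
    also have "\<dots> < 1 * (eta \<epsilon> * M)" using small(2) U_pos[of x_max] eta_pos by (intro mult_strict_right_mono) auto
    finally show ?thesis using Ub by simp
  qed
  define p where "p x = U x - H" for x
  have cp: "continuous_on {b - \<rho>..b + \<rho>} p" unfolding p_def using continuous_on_U by (intro continuous_intros)
  obtain c d where cd: "b - \<rho> \<le> c" "c < b" "b < d" "d \<le> b + \<rho>" "p c = 0" "p d = 0"
      "\<And>x. c < x \<Longrightarrow> x < d \<Longrightarrow> p x > 0"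
    by (rule positive_component_around[OF cp, of b]) (use H_gt \<open>H < U b\<close> rho in \<open>auto simp: p_def\<close>)
  have "b - \<rho> < c" using cd(1,5) H_gt(1) unfolding p_def by (cases "c = b - \<rho>") auto
  interpret sh: shooting \<epsilon> V "b - \<rho>" "b + \<rho>" using eps V_cont rho by unfold_locales auto
  have "\<not> sh.positive_shot (\<Lambda> + C0 * \<epsilon>\<^sup>2 / 2)"
  proof (rule sh.not_positive_shot_if_subsolution[of c d p U' U''])
    show "(p has_real_derivative U' x) (at x)" for x unfolding p_def using dU by (auto intro!: derivative_eq_intros)
    show "shooting_coeff \<epsilon> V (\<Lambda> + C0 * \<epsilon>\<^sup>2 / 2) x * p x \<le> U'' x" if "c < x" "x < d" for x
      using shifted_U_subsolution[OF b _ C0 Ub small(1), of x H] that cd H_le H_gt U_pos[of "b - \<rho>"] eps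
      unfolding p_def U''_eq[symmetric] by (simp add: shooting_coeff_mult_le_iff)
  qed (use cd cp \<open>b - \<rho> < c\<close> dU' in \<open>auto intro: continuous_on_subset\<close>)
  then obtain \<nu> where "\<nu> \<le> \<Lambda> + C0 * \<epsilon>\<^sup>2 / 2" "\<nu> \<in> dirichlet_eigenvalues \<epsilon> V (b - \<rho>) (b + \<rho>)"
    using sh.shooting[of 0] V_nonneg by blast
  with first_dirichlet_eigenvalue_bounds(2)[OF eps U_pos dU dU' U_eq] show ?thesis by force
qed

lemma well_ratio_bound:
  assumes b: "b \<in> {0, 1/2}" and C0: "C0 > 0" "C0 * \<epsilon> \<le> 2"
    and small: "56 * eta \<epsilon> \<le> C0 * harnack_const * \<epsilon>" "4 * eta \<epsilon> < 1" "eta \<epsilon> < harnack_const"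
    and E: "E_well \<epsilon> (1/2 - b) \<le> E_well \<epsilon> b - C0 * \<epsilon>\<^sup>2"
  shows "U b / U (1/2 - b) \<le> eta \<epsilon> / harnack_const"
proof -
  have b': "1/2 - b \<in> {0, 1/2}" using b by auto
  have "U b < eta \<epsilon> * M"
  proof (rule ccontr)
    assume "\<not> U b < eta \<epsilon> * M"
    then have "E_well \<epsilon> b \<le> \<Lambda> + C0 * \<epsilon>\<^sup>2 / 2" using E_well_le[OF b C0 _ small(1,2)] by simp
    moreover have "\<Lambda> \<le> E_well \<epsilon> (1/2 - b)" by (rule E_well_ge[OF b'])
    moreover have "C0 * \<epsilon>\<^sup>2 > 0" using C0 eps by simp
    ultimately show False using E by linarith
  qed
  obtain c where c: "c \<in> {0, 1/2}" "\<bar>x_max - c\<bar> \<le> 4 * s" using max_near_well by blast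
  then have near: "harnack_const * M \<le> U c"
    using harnack_near_well[OF c(1), of c x_max] s_pos by simp
  moreover have "eta \<epsilon> * M < harnack_const * M" using small(3) U_pos[of x_max] by simp
  ultimately have "c \<noteq> b" using \<open>U b < eta \<epsilon> * M\<close> by auto
  with b c(1) have "c = 1/2 - b" by auto
  with near have "harnack_const * M \<le> U (1/2 - b)" by simp
  have "U b * harnack_const < (eta \<epsilon> * M) * harnack_const"
    using \<open>U b < eta \<epsilon> * M\<close> harnack_const_pos by simp
  also have "\<dots> = eta \<epsilon> * (harnack_const * M)" by simp
  also have "\<dots> \<le> eta \<epsilon> * U (1/2 - b)"
    using \<open>harnack_const * M \<le> U (1/2 - b)\<close> eta_pos[of \<epsilon>] by (intro mult_left_mono) auto
  finally have "U b * harnack_const < eta \<epsilon> * U (1/2 - b)" .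
  then show ?thesis using U_pos[of "1/2 - b"] by (simp add: field_simps harnack_const_def)
qed

end

lemma exp_ge_inverse:
  fixes a N \<epsilon> :: real
  assumes "a > 0" "N > 0" "\<epsilon> > 0" "\<epsilon> \<le> a\<^sup>2 / (4 * N)"
  shows "N / \<epsilon> \<le> exp (a / \<epsilon>)"
proof -
  have "N / \<epsilon> \<le> (a / \<epsilon>)\<^sup>2 / 4"
    using assms by (simp add: field_simps power2_eq_square)
  also have "\<dots> \<le> (1 + (a / \<epsilon>) / real 2) ^ 2"
    using assms by (simp add: power2_eq_square field_simps)
  also have "\<dots> \<le> exp (a / \<epsilon>)"
  proof (rule exp_ge_one_plus_x_over_n_power_n)
    have "a / \<epsilon> > 0" using assms by simp
    then show "- real 2 \<le> a / \<epsilon>" by simp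
  qed simp
  finally show ?thesis .
qed

lemma liminf_neg_scaled_log_pos:
  fixes e r :: "nat \<Rightarrow> real"
  assumes e: "\<And>n. e n > 0" "e \<longlonglongrightarrow> 0" and r: "\<And>n. r n > 0"
    and bound: "\<And>n. e n < \<epsilon>0 \<Longrightarrow> r n \<le> C * exp (- \<sigma> / e n)"
    and pos: "\<sigma> > 0" "C > 0" "\<epsilon>0 > 0"
  shows "liminf (\<lambda>n. ereal (- 2 * e n * ln (r n))) > 0"
proof -
  have "(\<lambda>n. e n * ln C) \<longlonglongrightarrow> 0 * ln C" by (intro tendsto_intros e(2))
  then have "eventually (\<lambda>n. e n * ln C < \<sigma> / 2) sequentially"
    using pos by (intro order_tendstoD(2)) auto
  moreover have "eventually (\<lambda>n. e n < \<epsilon>0) sequentially" using order_tendstoD(2)[OF e(2) pos(3)] .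
  ultimately have "eventually (\<lambda>n. ereal \<sigma> \<le> ereal (- 2 * e n * ln (r n))) sequentially"
  proof eventually_elim
    case (elim n)
    have "ln (r n) \<le> ln (C * exp (- \<sigma> / e n))" using bound[OF elim(2)] r[of n] by simp
    also have "\<dots> = ln C - \<sigma> / e n" using pos by (simp add: ln_mult)
    finally have "e n * ln (r n) \<le> e n * ln C - \<sigma>"
      using e(1)[of n] mult_left_mono[of _ _ "e n"] by (fastforce simp: field_simps)
    with elim(1) show ?case by simp
  qed
  then have "ereal \<sigma> \<le> liminf (\<lambda>n. ereal (- 2 * e n * ln (r n)))" by (rule Liminf_bounded)
  with pos(1) show ?thesis by (simp add: less_le_trans[of 0 "ereal \<sigma>"])
qed

context double_well
begin

lemma eta_small:
  assumes C0: "C0 > 0" and \<epsilon>: "0 < \<epsilon>" "\<epsilon> < 1"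
    and N: "N = 56 / (C0 * harnack_const) + 1 / harnack_const + 4" and small: "\<epsilon> \<le> decay_rate\<^sup>2 / (16 * N)"
  shows "56 * eta \<epsilon> \<le> C0 * harnack_const * \<epsilon>" "4 * eta \<epsilon> < 1" "eta \<epsilon> < harnack_const"
proof -
  have N_ge: "N \<ge> 56 / (C0 * harnack_const)" "N > 4" "N > 1 / harnack_const"
    unfolding N using C0 harnack_const_pos by (simp_all add: add_pos_pos)
  then have "N > 0" by simp
  have "N / \<epsilon> \<le> exp ((decay_rate / 2) / \<epsilon>)"
    using exp_ge_inverse[of "decay_rate / 2" N \<epsilon>] decay_rate_pos \<open>N > 0\<close> \<epsilon> small
    by (simp add: power_divide)
  then have eta_le: "eta \<epsilon> \<le> \<epsilon> / N"
    unfolding eta_def using \<epsilon> \<open>N > 0\<close> by (simp add: exp_minus field_simps)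
  have "\<epsilon> / N < 1 / N" using \<epsilon> \<open>N > 0\<close> by (simp add: divide_strict_right_mono)
  show "56 * eta \<epsilon> \<le> C0 * harnack_const * \<epsilon>"
  proof -
    have "56 * eta \<epsilon> \<le> 56 * \<epsilon> / N" using eta_le by simp
    also have "\<dots> \<le> C0 * harnack_const * \<epsilon>"
      using N_ge(1) C0 harnack_const_pos \<epsilon> \<open>N > 0\<close> by (simp add: field_simps)
    finally show ?thesis .
  qed
  have eta_lt: "eta \<epsilon> < 1 / N" using eta_le \<open>\<epsilon> / N < 1 / N\<close> by linarith
  moreover have "1 / N < 1 / 4" using N_ge(2) by (simp add: field_simps)
  ultimately show "4 * eta \<epsilon> < 1" by linarith
  have "1 / N < harnack_const"
    using N_ge(3) harnack_const_pos \<open>N > 0\<close> by (simp add: field_simps mult.commute)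
  with eta_lt show "eta \<epsilon> < harnack_const" by linarith
qed

lemma exponential_ratio_bound:
  assumes C0: "C0 > 0"
  obtains \<epsilon>0 where "\<epsilon>0 > 0"
    "\<And>\<epsilon> U b. 0 < \<epsilon> \<Longrightarrow> \<epsilon> < \<epsilon>0 \<Longrightarrow> principal_eigenfunction \<epsilon> V U \<Longrightarrow> b \<in> {0, 1/2} \<Longrightarrow>
       E_well \<epsilon> (1/2 - b) \<le> E_well \<epsilon> b - C0 * \<epsilon>\<^sup>2 \<Longrightarrow>
       U b / U (1/2 - b) \<le> (1 / harnack_const) * exp (- (decay_rate / 2) / \<epsilon>)"
proof -
  define N where "N = 56 / (C0 * harnack_const) + 1 / harnack_const + 4"
  have "N > 0" unfolding N_def using C0 harnack_const_pos by (simp add: add_pos_pos)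
  define \<epsilon>0 where "\<epsilon>0 = Min {\<rho>\<^sup>2 / 144, gap / 12, 2 / C0, decay_rate\<^sup>2 / (16 * N), 1}"
  have "\<epsilon>0 > 0" unfolding \<epsilon>0_def using rho gap(1) C0 decay_rate_pos \<open>N > 0\<close> by simp
  moreover have "U b / U (1/2 - b) \<le> (1 / harnack_const) * exp (- (decay_rate / 2) / \<epsilon>)"
    if \<epsilon>: "0 < \<epsilon>" "\<epsilon> < \<epsilon>0" and U: "principal_eigenfunction \<epsilon> V U" and b: "b \<in> {0, 1/2}"
      and E: "E_well \<epsilon> (1/2 - b) \<le> E_well \<epsilon> b - C0 * \<epsilon>\<^sup>2" for \<epsilon> U b
  proof -
    have \<epsilon>_lt: "\<epsilon> < \<rho>\<^sup>2 / 144" "\<epsilon> < gap / 12" "\<epsilon> < 2 / C0" "\<epsilon> < decay_rate\<^sup>2 / (16 * N)" "\<epsilon> < 1"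
      using \<epsilon>(2) unfolding \<epsilon>0_def by auto
    have "sqrt \<epsilon> < sqrt (\<rho>\<^sup>2 / 144)" using \<epsilon>_lt(1) by (rule real_sqrt_less_mono)
    then have "12 * sqrt \<epsilon> < \<rho>" using rho by (simp add: real_sqrt_divide)
    moreover obtain U' U'' where "\<And>x. (U has_real_derivative U' x) (at x)"
      "\<And>x. (U' has_real_derivative U'' x) (at x)"
      "\<And>x. - 2 * \<epsilon>\<^sup>2 * U'' x + V x * U x = principal_eigenvalue \<epsilon> V * U x"
      using U unfolding principal_eigenfunction_def by blast
    ultimately interpret positive_state \<rho> A V \<epsilon> "principal_eigenvalue \<epsilon> V" U U' U''
      using \<epsilon> \<epsilon>_lt(2) U unfolding principal_eigenfunction_def by unfold_locales auto
    have "C0 * \<epsilon> \<le> 2" using \<epsilon>_lt(3) C0 by (simp add: field_simps)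
    with eta_small[OF C0 \<epsilon>(1) \<epsilon>_lt(5) N_def] \<epsilon>_lt(4)
    have "U b / U (1/2 - b) \<le> eta \<epsilon> / harnack_const"
      using well_ratio_bound[OF b C0 _ _ _ _ E] by simp
    then show ?thesis unfolding eta_def by simp
  qed
  ultimately show ?thesis by (rule that)
qed

lemma ratio_bound_along_sequences:
  assumes C0: "C0 > 0" and U: "\<And>\<epsilon>. \<epsilon> > 0 \<Longrightarrow> principal_eigenfunction \<epsilon> V (U \<epsilon>)"
  obtains \<sigma> C \<epsilon>0 where "\<sigma> > 0" "C > 0" "\<epsilon>0 > 0"
    "\<And>e b. (\<forall>n. 0 < e n) \<Longrightarrow> e \<longlonglongrightarrow> 0 \<Longrightarrow> b \<in> {0, 1/2} \<Longrightarrow>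
       (\<forall>n. E_well (e n) (1/2 - b) \<le> E_well (e n) b - C0 * (e n)\<^sup>2) \<Longrightarrow>
       (\<forall>n. e n < \<epsilon>0 \<longrightarrow> U (e n) b / U (e n) (1/2 - b) \<le> C * exp (- \<sigma> / e n)) \<and>
       0 < liminf (\<lambda>n. ereal (- 2 * e n * ln (U (e n) b / U (e n) (1/2 - b))))"
proof -
  obtain \<epsilon>0 where \<epsilon>0: "\<epsilon>0 > 0" and ratio: "\<And>\<epsilon> U b. 0 < \<epsilon> \<Longrightarrow> \<epsilon> < \<epsilon>0 \<Longrightarrow>
      principal_eigenfunction \<epsilon> V U \<Longrightarrow> b \<in> {0, 1/2} \<Longrightarrow> E_well \<epsilon> (1/2 - b) \<le> E_well \<epsilon> b - C0 * \<epsilon>\<^sup>2 \<Longrightarrow>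
      U b / U (1/2 - b) \<le> (1 / harnack_const) * exp (- (decay_rate / 2) / \<epsilon>)"
    using exponential_ratio_bound[OF C0] by blast
  have const_pos: "decay_rate / 2 > 0" "1 / harnack_const > 0"
    using decay_rate_pos harnack_const_pos by simp_all
  have along: "(\<forall>n. e n < \<epsilon>0 \<longrightarrow> U (e n) b / U (e n) (1/2 - b) \<le> 1 / harnack_const * exp (- (decay_rate / 2) / e n)) \<and>
     0 < liminf (\<lambda>n. ereal (- 2 * e n * ln (U (e n) b / U (e n) (1/2 - b))))"
    if e: "\<forall>n. 0 < e n" "e \<longlonglongrightarrow> 0" and b: "b \<in> {0, 1/2}"
      and E: "\<forall>n. E_well (e n) (1/2 - b) \<le> E_well (e n) b - C0 * (e n)\<^sup>2" for e b
  proof -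
    have bound: "U (e n) b / U (e n) (1/2 - b) \<le> 1 / harnack_const * exp (- (decay_rate / 2) / e n)"
      if "e n < \<epsilon>0" for n
      using ratio[OF _ that U b] e(1) E by blast
    moreover have "U (e n) b / U (e n) (1/2 - b) > 0" for n
      using U[of "e n"] e(1) unfolding principal_eigenfunction_def by simp
    ultimately show ?thesis using liminf_neg_scaled_log_pos[OF _ e(2) _ bound const_pos \<epsilon>0] e(1) by auto
  qed
  show ?thesis by (rule that[OF const_pos \<epsilon>0 along])
qed

end

lemma limsup_neg_if_liminf_reciprocal_pos:
  fixes e r r' :: "nat \<Rightarrow> real"
  assumes "\<And>n. r n > 0" "\<And>n. r' n = 1 / r n"
    and "liminf (\<lambda>n. ereal (- 2 * e n * ln (r n))) > 0"
  shows "limsup (\<lambda>n. ereal (- 2 * e n * ln (r' n))) < 0"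
proof -
  have "ln (r' n) = - ln (r n)" for n using assms(1)[of n] assms(2)[of n] by (simp add: ln_div)
  then have "(\<lambda>n. ereal (- 2 * e n * ln (r' n))) = (\<lambda>n. - ereal (- 2 * e n * ln (r n)))" by simp
  then have "limsup (\<lambda>n. ereal (- 2 * e n * ln (r' n))) = - liminf (\<lambda>n. ereal (- 2 * e n * ln (r n)))"
    using ereal_Limsup_uminus[of sequentially "\<lambda>n. ereal (- 2 * e n * ln (r n))"] by simp
  with assms(3) show ?thesis by (simp add: ereal_uminus_less_reorder)
qed

lemma continuous_on_if_C3: "C3 f \<Longrightarrow> continuous_on UNIV f"
  unfolding C3_def by (metis continuous_at_imp_continuous_on differentiable_imp_continuous_within
      funpow_0 zero_less_numeral)

theorem lemma3p1:
  fixes \<rho> A C\<^sub>0 :: real and V :: "real \<Rightarrow> real" and U :: "real \<Rightarrow> real \<Rightarrow> real"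
  assumes rho: "0 < \<rho>" "\<rho> < 1/20"
    and A: "A \<noteq> 0" "2 * \<bar>A\<bar> * \<rho>\<^sup>2 \<le> 1/4"
    and Vper: "periodic1 V" and VC3: "C3 V"
    and V0: "\<And>x. \<bar>x\<bar> < \<rho> \<Longrightarrow> V x = x\<^sup>2 / 2 + A * x ^ 4 * omega \<bar>x\<bar>"
    and Va: "\<And>x. \<bar>x - 1/2\<bar> < \<rho> \<Longrightarrow>
               V x = (x - 1/2)\<^sup>2 / 2 - A * (x - 1/2) ^ 4 * omega \<bar>x - 1/2\<bar>"
    and Vpos: "\<And>x. x \<notin> \<int> \<Longrightarrow> x - 1/2 \<notin> \<int> \<Longrightarrow> V x > 0"
    and C0: "C\<^sub>0 > 0"
    and U: "\<And>\<epsilon>. \<epsilon> > 0 \<Longrightarrow> principal_eigenfunction \<epsilon> V (U \<epsilon>)"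
  shows "\<exists>\<sigma> C \<epsilon>\<^sub>0. \<sigma> > 0 \<and> C > 0 \<and> \<epsilon>\<^sub>0 > 0 \<and>
    (let \<phi> = (\<lambda>\<epsilon> x. - 2 * \<epsilon> * ln (U \<epsilon> x / U \<epsilon> 0));
         E0 = (\<lambda>\<epsilon>. first_dirichlet_eigenvalue \<epsilon> V (- \<rho>) \<rho>);
         Ea = (\<lambda>\<epsilon>. first_dirichlet_eigenvalue \<epsilon> V (1/2 - \<rho>) (1/2 + \<rho>))
     in (\<forall>e :: nat \<Rightarrow> real. (\<forall>n. e n > 0) \<and> e \<longlonglongrightarrow> 0 \<and>
            (\<forall>n. E0 (e n) \<le> Ea (e n) - C\<^sub>0 * (e n)\<^sup>2) \<longrightarrow>
            (\<forall>n. e n < \<epsilon>\<^sub>0 \<longrightarrow> U (e n) (1/2) / U (e n) 0 \<le> C * exp (- \<sigma> / e n)) \<and>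
            liminf (\<lambda>n. ereal (\<phi> (e n) (1/2))) > 0)
      \<and> (\<forall>e :: nat \<Rightarrow> real. (\<forall>n. e n > 0) \<and> e \<longlonglongrightarrow> 0 \<and>
            (\<forall>n. Ea (e n) \<le> E0 (e n) - C\<^sub>0 * (e n)\<^sup>2) \<longrightarrow>
            (\<forall>n. e n < \<epsilon>\<^sub>0 \<longrightarrow> U (e n) 0 / U (e n) (1/2) \<le> C * exp (- \<sigma> / e n)) \<and>
            limsup (\<lambda>n. ereal (\<phi> (e n) (1/2))) < 0))"
proof -
  interpret double_well \<rho> A V
    using rho A Vper continuous_on_if_C3[OF VC3] V0 Va Vpos by unfold_locales auto
  obtain \<sigma> C \<epsilon>\<^sub>0 where pos: "\<sigma> > 0" "C > 0" "\<epsilon>\<^sub>0 > 0" and along: "\<And>e b. (\<forall>n. 0 < e n) \<Longrightarrow>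
      e \<longlonglongrightarrow> 0 \<Longrightarrow> b \<in> {0, 1/2} \<Longrightarrow> (\<forall>n. E_well (e n) (1/2 - b) \<le> E_well (e n) b - C\<^sub>0 * (e n)\<^sup>2) \<Longrightarrow>
      (\<forall>n. e n < \<epsilon>\<^sub>0 \<longrightarrow> U (e n) b / U (e n) (1/2 - b) \<le> C * exp (- \<sigma> / e n)) \<and>
      0 < liminf (\<lambda>n. ereal (- 2 * e n * ln (U (e n) b / U (e n) (1/2 - b))))"
    using ratio_bound_along_sequences[OF C0 U] by blast
  have Upos: "U \<epsilon> x > 0" if "\<epsilon> > 0" for \<epsilon> x
    using U[OF that] unfolding principal_eigenfunction_def by blast
  show ?thesis unfolding Let_def
  proof (rule exI[of _ \<sigma>], rule exI[of _ C], rule exI[of _ \<epsilon>\<^sub>0], intro conjI pos; intro allI impI)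
    fix e :: "nat \<Rightarrow> real"
    assume "(\<forall>n. 0 < e n) \<and> e \<longlonglongrightarrow> 0 \<and> (\<forall>n. first_dirichlet_eigenvalue (e n) V (- \<rho>) \<rho> \<le> E_well (e n) (1/2) - C\<^sub>0 * (e n)\<^sup>2)"
    with along[of e "1/2"] show "(\<forall>n. e n < \<epsilon>\<^sub>0 \<longrightarrow> U (e n) (1/2) / U (e n) 0 \<le> C * exp (- \<sigma> / e n)) \<and>
        0 < liminf (\<lambda>n. ereal (- 2 * e n * ln (U (e n) (1/2) / U (e n) 0)))" by simp
  next
    fix e :: "nat \<Rightarrow> real"
    assume "(\<forall>n. 0 < e n) \<and> e \<longlonglongrightarrow> 0 \<and> (\<forall>n. E_well (e n) (1/2) \<le> first_dirichlet_eigenvalue (e n) V (- \<rho>) \<rho> - C\<^sub>0 * (e n)\<^sup>2)"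
    with along[of e 0] show "(\<forall>n. e n < \<epsilon>\<^sub>0 \<longrightarrow> U (e n) 0 / U (e n) (1/2) \<le> C * exp (- \<sigma> / e n)) \<and>
        limsup (\<lambda>n. ereal (- 2 * e n * ln (U (e n) (1/2) / U (e n) 0))) < 0"
      using limsup_neg_if_liminf_reciprocal_pos[of "\<lambda>n. U (e n) 0 / U (e n) (1/2)"] Upos by simp
  qed
qed

end
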